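(* Let $\mathcal{H}_A,\mathcal{H}_B$ be separable Hilbert spaces. A sequence $\{\Phi_n\}_{n\geq1}$ of quantum operations from $\mathfrak{T}(\mathcal{H}_A)$ to $\mathfrak{T}(\mathcal{H}_B)$ strongly converges to a quantum operation $\Phi_0$ if and only if there exist a separable Hilbert space $\mathcal{H}_C$ and a sequence $\{\widetilde{\Phi}_n\}_{n\geq1}$ of quantum channels from $\mathfrak{T}(\mathcal{H}_A)$ to $\mathfrak{T}(\mathcal{H}_B\oplus\mathcal{H}_C)$ strongly converging to a quantum channel $\widetilde{\Phi}_0$ such that $$\Phi_n(\rho)=P_B\widetilde{\Phi}_n(\rho)P_B\quad\forall\rho\in\mathfrak{T}(\mathcal{H}_A),\ \forall n\geq0,$$ where $P_B$ is the projector onto the subspace $\mathcal{H}_B$ of $\mathcal{H}_B\oplus\mathcal{H}_C$.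
   Context: $\mathfrak{T}(\mathcal{H})$ is the Banach space of trace-class operators with the trace norm and $\mathfrak{S}(\mathcal{H})$ the set of density operators. A quantum operation is a completely positive trace-non-increasing linear map between trace-class spaces; a quantum channel is a trace-preserving quantum operation. A sequence $\{\Phi_n\}$ of quantum operations strongly converges to $\Phi_0$ if $\Phi_n(\rho)\to\Phi_0(\rho)$ in trace norm for every density operator $\rho$ on the input space. *)

theory Defs
  imports "HOL-Analysis.Analysis"
begin

text \<open>
Separable Hilbert spaces are modelled concretely as l2(S) for a countable index set S:
vectors are functions S -> complex (zero outside S) with square-summable modulus.
Bounded operators are represented by their matrices with respect to the canonical
orthonormal basis, i.e. functions  'a => 'a => complex  vanishing outside S x S.
\<close>

definition l2 :: "'a set \<Rightarrow> ('a \<Rightarrow> complex) set" where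
  "l2 S = {x. (\<forall>i. i \<notin> S \<longrightarrow> x i = 0) \<and> (\<lambda>i. (cmod (x i))^2) summable_on S}"

definition l2norm :: "'a set \<Rightarrow> ('a \<Rightarrow> complex) \<Rightarrow> real" where
  "l2norm S x = sqrt (infsum (\<lambda>i. (cmod (x i))^2) S)"

definition nuclear_rep :: "'a set \<Rightarrow> (nat \<Rightarrow> 'a \<Rightarrow> complex) \<Rightarrow> (nat \<Rightarrow> 'a \<Rightarrow> complex) \<Rightarrow> bool" where
  "nuclear_rep S x y \<longleftrightarrow> (\<forall>k. x k \<in> l2 S \<and> y k \<in> l2 S)
      \<and> summable (\<lambda>k. l2norm S (x k) * l2norm S (y k))"

definition rep_op :: "(nat \<Rightarrow> 'a \<Rightarrow> complex) \<Rightarrow> (nat \<Rightarrow> 'a \<Rightarrow> complex) \<Rightarrow> ('a \<Rightarrow> 'a \<Rightarrow> complex)" where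
  "rep_op x y = (\<lambda>i j. \<Sum>k. x k i * cnj (y k j))"

definition trace_class :: "'a set \<Rightarrow> ('a \<Rightarrow> 'a \<Rightarrow> complex) set" where
  "trace_class S = {M. \<exists>x y. nuclear_rep S x y \<and> M = rep_op x y}"

definition trace_norm :: "'a set \<Rightarrow> ('a \<Rightarrow> 'a \<Rightarrow> complex) \<Rightarrow> real" where
  "trace_norm S M = Inf {(\<Sum>k. l2norm S (x k) * l2norm S (y k)) | x y. nuclear_rep S x y \<and> M = rep_op x y}"

definition trace :: "'a set \<Rightarrow> ('a \<Rightarrow> 'a \<Rightarrow> complex) \<Rightarrow> complex" where
  "trace S M = infsum (\<lambda>i. M i i) S"

definition qform :: "'a set \<Rightarrow> ('a \<Rightarrow> 'a \<Rightarrow> complex) \<Rightarrow> ('a \<Rightarrow> complex) \<Rightarrow> complex" where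
  "qform S M v = infsum (\<lambda>i. cnj (v i) * infsum (\<lambda>j. M i j * v j) S) S"

definition positive_tc :: "'a set \<Rightarrow> ('a \<Rightarrow> 'a \<Rightarrow> complex) \<Rightarrow> bool" where
  "positive_tc S M \<longleftrightarrow> M \<in> trace_class S \<and>
     (\<forall>v \<in> l2 S. Im (qform S M v) = 0 \<and> Re (qform S M v) \<ge> 0)"

definition density_ops :: "'a set \<Rightarrow> ('a \<Rightarrow> 'a \<Rightarrow> complex) set" where
  "density_ops S = {M. positive_tc S M \<and> trace S M = 1}"

text \<open>Ampliation id_n (x) Phi acting on block operators on l2(S x {..<n}).\<close>
definition ampl :: "nat \<Rightarrow> (('a \<Rightarrow> 'a \<Rightarrow> complex) \<Rightarrow> ('b \<Rightarrow> 'b \<Rightarrow> complex))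
     \<Rightarrow> (('a \<times> nat) \<Rightarrow> ('a \<times> nat) \<Rightarrow> complex) \<Rightarrow> (('b \<times> nat) \<Rightarrow> ('b \<times> nat) \<Rightarrow> complex)" where
  "ampl n \<Phi> W = (\<lambda>(i, k) (j, l). if k < n \<and> l < n
       then \<Phi> (\<lambda>i' j'. W (i', k) (j', l)) i j else 0)"

definition quantum_operation :: "'a set \<Rightarrow> 'b set \<Rightarrow> (('a \<Rightarrow> 'a \<Rightarrow> complex) \<Rightarrow> ('b \<Rightarrow> 'b \<Rightarrow> complex)) \<Rightarrow> bool" where
  "quantum_operation A B \<Phi> \<longleftrightarrow>
     (\<forall>M \<in> trace_class A. \<Phi> M \<in> trace_class B)
   \<and> (\<forall>M \<in> trace_class A. \<forall>N \<in> trace_class A. \<Phi> (\<lambda>i j. M i j + N i j) = (\<lambda>i j. \<Phi> M i j + \<Phi> N i j))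
   \<and> (\<forall>M \<in> trace_class A. \<forall>c::complex. \<Phi> (\<lambda>i j. c * M i j) = (\<lambda>i j. c * \<Phi> M i j))
   \<and> (\<forall>n. \<forall>W. positive_tc (A \<times> {..<n}) W \<longrightarrow> positive_tc (B \<times> {..<n}) (ampl n \<Phi> W))
   \<and> (\<forall>M. positive_tc A M \<longrightarrow> Re (trace B (\<Phi> M)) \<le> Re (trace A M))"

definition quantum_channel :: "'a set \<Rightarrow> 'b set \<Rightarrow> (('a \<Rightarrow> 'a \<Rightarrow> complex) \<Rightarrow> ('b \<Rightarrow> 'b \<Rightarrow> complex)) \<Rightarrow> bool" where
  "quantum_channel A B \<Phi> \<longleftrightarrow> quantum_operation A B \<Phi>
     \<and> (\<forall>M \<in> trace_class A. trace B (\<Phi> M) = trace A M)"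

definition strongly_converges :: "'a set \<Rightarrow> 'b set \<Rightarrow> (nat \<Rightarrow> ('a \<Rightarrow> 'a \<Rightarrow> complex) \<Rightarrow> ('b \<Rightarrow> 'b \<Rightarrow> complex))
     \<Rightarrow> (('a \<Rightarrow> 'a \<Rightarrow> complex) \<Rightarrow> ('b \<Rightarrow> 'b \<Rightarrow> complex)) \<Rightarrow> bool" where
  "strongly_converges A B \<Phi>s \<Phi>0 \<longleftrightarrow>
     (\<forall>\<rho> \<in> density_ops A. (\<lambda>n. trace_norm B (\<lambda>i j. \<Phi>s n \<rho> i j - \<Phi>0 \<rho> i j)) \<longlonglongrightarrow> 0)"

end

theory Submission
  imports Defs
begin

(* Completing a quantum operation Phi by its trace defect Tr rho - Tr Phi(rho), placed on one extra
   basis vector, gives a channel rho |-> Phi(rho) (+) (Tr rho - Tr Phi(rho)) |0><0| on l2(B + {0}).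
   Its ampliations split into the ampliations of Phi and the matrix [Tr W_kl - Tr Phi(W_kl)]_kl of
   trace defects of the blocks of W; that matrix is positive because compressing W by a vector a
   commutes with Phi, and Phi does not increase the trace of the positive compression.
   The completion changes trace-norm distances by at most a factor 2, since the extra entry is
   bounded by the trace norm; conversely, cutting down to the B-block does not increase the trace
   norm. So strong convergence passes in both directions. *)

section \<open>Square-summable families\<close>

lemma l2_vanishes: "x \<in> l2 S \<Longrightarrow> i \<notin> S \<Longrightarrow> x i = 0"
  by (simp add: l2_def)

lemma l2_summable: "x \<in> l2 S \<Longrightarrow> (\<lambda>i. (cmod (x i))^2) summable_on S"
  by (simp add: l2_def)

lemma l2I: "(\<And>i. i \<notin> S \<Longrightarrow> x i = 0) \<Longrightarrow> (\<lambda>i. (cmod (x i))^2) summable_on S \<Longrightarrow> x \<in> l2 S"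
  by (simp add: l2_def)

lemma l2norm_nonneg: "l2norm S x \<ge> 0"
  unfolding l2norm_def by (simp add: infsum_nonneg)

lemma l2norm_squared: "(l2norm S x)^2 = infsum (\<lambda>i. (cmod (x i))^2) S"
  unfolding l2norm_def by (simp add: infsum_nonneg)

lemma norm_le_l2norm:
  assumes "x \<in> l2 S"
  shows "cmod (x i) \<le> l2norm S x"
proof (cases "i \<in> S")
  case True
  have "(cmod (x i))^2 = (\<Sum>i\<in>{i}. (cmod (x i))^2)" by simp
  also have "\<dots> \<le> infsum (\<lambda>i. (cmod (x i))^2) S"
    by (rule finite_sum_le_infsum) (use True l2_summable[OF assms] in auto)
  finally show ?thesis unfolding l2norm_def by (simp add: real_le_rsqrt)
qed (use assms in \<open>simp add: l2_vanishes l2norm_nonneg\<close>)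

lemma l2_finite_support:
  assumes "finite F" "F \<subseteq> S" "\<And>i. i \<notin> F \<Longrightarrow> x i = 0"
  shows "x \<in> l2 S" "l2norm S x = sqrt (\<Sum>i\<in>F. (cmod (x i))^2)"
proof -
  have "(\<lambda>i. (cmod (x i))^2) summable_on S \<longleftrightarrow> (\<lambda>i. (cmod (x i))^2) summable_on F"
    by (rule summable_on_cong_neutral) (use assms in auto)
  then show "x \<in> l2 S" using assms by (auto intro!: l2I)
  have "infsum (\<lambda>i. (cmod (x i))^2) S = infsum (\<lambda>i. (cmod (x i))^2) F"
    by (rule infsum_cong_neutral) (use assms in auto)
  then show "l2norm S x = sqrt (\<Sum>i\<in>F. (cmod (x i))^2)"
    using assms(1) by (simp add: l2norm_def)
qed

lemma l2_dominated:
  assumes "\<And>i. i \<notin> S \<Longrightarrow> x i = 0" "g summable_on S" "\<And>i. i \<in> S \<Longrightarrow> (cmod (x i))^2 \<le> g i"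
  shows "x \<in> l2 S" "l2norm S x \<le> sqrt (infsum g S)"
proof -
  have s: "(\<lambda>i. (cmod (x i))^2) summable_on S"
    by (rule summable_on_comparison_test[OF assms(2)]) (use assms(3) in auto)
  then show "x \<in> l2 S" using assms(1) by (auto intro: l2I)
  show "l2norm S x \<le> sqrt (infsum g S)"
    unfolding l2norm_def by (intro real_sqrt_le_mono infsum_mono s assms(2,3))
qed

lemma l2_scaleC:
  assumes "x \<in> l2 S"
  shows "(\<lambda>i. c * x i) \<in> l2 S" "l2norm S (\<lambda>i. c * x i) = cmod c * l2norm S x"
proof -
  have sq: "(\<lambda>i. (cmod (c * x i))^2) = (\<lambda>i. (cmod c)^2 * (cmod (x i))^2)"
    by (simp add: norm_mult power_mult_distrib)
  show "(\<lambda>i. c * x i) \<in> l2 S"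
    by (rule l2I) (use assms in \<open>simp_all add: l2_vanishes sq summable_on_cmult_right l2_summable\<close>)
  show "l2norm S (\<lambda>i. c * x i) = cmod c * l2norm S x"
    unfolding l2norm_def sq infsum_cmult_right' by (simp add: real_sqrt_mult)
qed

lemma l2_mult_summable:
  assumes "u \<in> l2 S" "v \<in> l2 S"
  shows "(\<lambda>i. cmod (u i) * cmod (v i)) summable_on S"
proof -
  have "(\<lambda>i. (1/2) * ((cmod (u i))^2 + (cmod (v i))^2)) summable_on S"
    using summable_on_add[OF l2_summable[OF assms(1)] l2_summable[OF assms(2)]]
    by (rule summable_on_cmult_right)
  then show ?thesis
  proof (rule summable_on_comparison_test)
    fix i
    have "0 \<le> (cmod (u i) - cmod (v i))^2" by simp
    then show "cmod (u i) * cmod (v i) \<le> (1/2) * ((cmod (u i))^2 + (cmod (v i))^2)"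
      by (simp add: power2_eq_square algebra_simps)
  qed simp
qed

lemma l2_mult_infsum_le:
  assumes "u \<in> l2 S" "v \<in> l2 S"
  shows "infsum (\<lambda>i. cmod (u i) * cmod (v i)) S \<le> l2norm S u * l2norm S v"
proof (rule infsum_le_finite_sums[OF l2_mult_summable[OF assms]])
  fix F assume F: "finite F" "F \<subseteq> S"
  have L2_le: "L2_set (\<lambda>i. cmod (w i)) F \<le> l2norm S w" if "w \<in> l2 S" for w
    unfolding L2_set_def l2norm_def
    by (rule real_sqrt_le_mono, rule finite_sum_le_infsum) (use F l2_summable[OF that] in auto)
  have "(\<Sum>i\<in>F. cmod (u i) * cmod (v i)) \<le> L2_set (\<lambda>i. cmod (u i)) F * L2_set (\<lambda>i. cmod (v i)) F"
    using L2_set_mult_ineq[of "\<lambda>i. cmod (u i)" "\<lambda>i. cmod (v i)" F] by simp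
  also have "\<dots> \<le> l2norm S u * l2norm S v"
    by (intro mult_mono L2_le assms l2norm_nonneg L2_set_nonneg)
  finally show "(\<Sum>i\<in>F. cmod (u i) * cmod (v i)) \<le> l2norm S u * l2norm S v" .
qed

definition l2_inner :: "'a set \<Rightarrow> ('a \<Rightarrow> complex) \<Rightarrow> ('a \<Rightarrow> complex) \<Rightarrow> complex" where
  "l2_inner S u v = infsum (\<lambda>i. cnj (u i) * v i) S"

lemma l2_inner_summable:
  assumes "u \<in> l2 S" "v \<in> l2 S"
  shows "(\<lambda>i. cnj (u i) * v i) summable_on S"
  by (rule abs_summable_summable) (use l2_mult_summable[OF assms] in \<open>simp add: norm_mult\<close>)

lemma norm_l2_inner_le:
  assumes "u \<in> l2 S" "v \<in> l2 S"
  shows "cmod (l2_inner S u v) \<le> l2norm S u * l2norm S v"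
proof -
  have "cmod (l2_inner S u v) \<le> infsum (\<lambda>i. cmod (cnj (u i) * v i)) S"
    unfolding l2_inner_def
    by (rule norm_infsum_bound) (use l2_mult_summable[OF assms] in \<open>simp add: norm_mult\<close>)
  also have "\<dots> \<le> l2norm S u * l2norm S v"
    using l2_mult_infsum_le[OF assms] by (simp add: norm_mult)
  finally show ?thesis .
qed

lemma infsum_nat_eq_suminf:
  fixes g :: "nat \<Rightarrow> 'b::banach"
  assumes "summable (\<lambda>k. norm (g k))"
  shows "infsum g UNIV = (\<Sum>k. g k)"
  using sums_unique[OF has_sum_imp_sums[OF has_sum_infsum[OF norm_summable_imp_summable_on[OF assms]]]]
  by simp

lemma infsum_suminf_swap:
  fixes f :: "nat \<Rightarrow> 'a \<Rightarrow> 'b::banach"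
  assumes summable_row: "\<And>k. (\<lambda>i. norm (f k i)) summable_on S"
    and summable_norms: "summable (\<lambda>k. infsum (\<lambda>i. norm (f k i)) S)"
  shows "(\<lambda>i. \<Sum>k. f k i) summable_on S"
    and "infsum (\<lambda>i. \<Sum>k. f k i) S = (\<Sum>k. infsum (f k) S)"
proof -
  have nonneg: "infsum (\<lambda>i. norm (f k i)) S \<ge> 0" for k by (simp add: infsum_nonneg)
  define F where "F = (\<lambda>(k, i). f k i)"
  have "(\<lambda>k. infsum (\<lambda>i. norm (f k i)) S) summable_on UNIV"
    using summable_norms nonneg by (intro norm_summable_imp_summable_on) simp
  then have abs_kS: "(\<lambda>x. norm (F x)) summable_on UNIV \<times> S"
    unfolding Infinite_Sum.abs_summable_on_Sigma_iff[where f=F and A=UNIV and B="\<lambda>_. S"]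
    using summable_row nonneg unfolding F_def by (simp only: prod.case real_norm_def abs_of_nonneg) simp
  have abs_iS: "(\<lambda>x. norm ((\<lambda>(i, k). f k i) x)) summable_on S \<times> UNIV"
    using abs_kS summable_on_swap[of "\<lambda>x. norm (F x)" UNIV S] by (simp add: F_def case_prod_unfold)
  have "\<forall>i\<in>S. (\<lambda>k. norm (f k i)) summable_on UNIV"
    using abs_iS[unfolded Infinite_Sum.abs_summable_on_Sigma_iff[where f="\<lambda>(i, k). f k i" and A=S and B="\<lambda>_. UNIV"]]
    by simp
  then have column: "summable (\<lambda>k. norm (f k i))" if "i \<in> S" for i
    using that by (simp add: summable_on_imp_summable)
  have column_sum: "infsum (\<lambda>k. f k i) UNIV = (\<Sum>k. f k i)" if "i \<in> S" for i
    by (rule infsum_nat_eq_suminf[OF column[OF that]])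
  have "(\<lambda>i. infsum (\<lambda>k. f k i) UNIV) summable_on S"
    using summable_on_Sigma_banach[OF abs_summable_summable[OF abs_iS]] by simp
  then show "(\<lambda>i. \<Sum>k. f k i) summable_on S"
    by (rule summable_on_cong[THEN iffD1, rotated]) (simp add: column_sum)
  have "infsum (\<lambda>k. infsum (f k) S) UNIV = infsum (\<lambda>i. infsum (\<lambda>k. f k i) UNIV) S"
    by (rule infsum_swap_banach) (use abs_summable_summable[OF abs_kS] in \<open>simp add: F_def\<close>)
  also have "\<dots> = infsum (\<lambda>i. \<Sum>k. f k i) S"
    by (rule infsum_cong) (simp add: column_sum)
  finally have swap: "infsum (\<lambda>k. infsum (f k) S) UNIV = infsum (\<lambda>i. \<Sum>k. f k i) S" .
  have "summable (\<lambda>k. norm (infsum (f k) S))"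
    by (rule summable_comparison_test[OF _ summable_norms])
       (use summable_row in \<open>auto intro!: norm_infsum_bound\<close>)
  from infsum_nat_eq_suminf[OF this] swap
  show "infsum (\<lambda>i. \<Sum>k. f k i) S = (\<Sum>k. infsum (f k) S)" by simp
qed

section \<open>Nuclear representations\<close>

lemma nuclear_repD:
  assumes "nuclear_rep S x y"
  shows "x k \<in> l2 S" "y k \<in> l2 S" "summable (\<lambda>k. l2norm S (x k) * l2norm S (y k))"
  using assms by (auto simp: nuclear_rep_def)

lemma nuclear_rep_entry_summable:
  assumes "nuclear_rep S x y"
  shows "summable (\<lambda>k. norm (x k i * cnj (y k j)))"
proof (rule summable_comparison_test[OF _ nuclear_repD(3)[OF assms]])
  show "\<exists>N. \<forall>k\<ge>N. norm (norm (x k i * cnj (y k j))) \<le> l2norm S (x k) * l2norm S (y k)"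
    using nuclear_repD[OF assms] by (auto simp: norm_mult intro!: mult_mono norm_le_l2norm l2norm_nonneg)
qed

lemma rep_op_vanishes:
  assumes "nuclear_rep S x y" "i \<notin> S \<or> j \<notin> S"
  shows "rep_op x y i j = 0"
  using assms l2_vanishes[OF nuclear_repD(1)[OF assms(1)]] l2_vanishes[OF nuclear_repD(2)[OF assms(1)]]
  by (auto simp: rep_op_def)

lemma trace_class_vanishes: "M \<in> trace_class S \<Longrightarrow> i \<notin> S \<or> j \<notin> S \<Longrightarrow> M i j = 0"
  by (auto simp: trace_class_def intro: rep_op_vanishes)

lemma trace_rep_op:
  assumes nr: "nuclear_rep S x y"
  shows "(\<lambda>i. rep_op x y i i) summable_on S"
    and "trace S (rep_op x y) = (\<Sum>k. l2_inner S (y k) (x k))"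
    and "cmod (trace S (rep_op x y)) \<le> (\<Sum>k. l2norm S (x k) * l2norm S (y k))"
proof -
  define f where "f = (\<lambda>k i. x k i * cnj (y k i))"
  have row: "(\<lambda>i. norm (f k i)) summable_on S" for k
    using l2_mult_summable[OF nuclear_repD(1,2)[OF nr]] by (simp add: f_def norm_mult)
  have "infsum (\<lambda>i. norm (f k i)) S \<le> l2norm S (x k) * l2norm S (y k)" for k
    using l2_mult_infsum_le[OF nuclear_repD(1,2)[OF nr]] by (simp add: f_def norm_mult)
  then have norms: "summable (\<lambda>k. infsum (\<lambda>i. norm (f k i)) S)"
    by (intro summable_comparison_test[OF _ nuclear_repD(3)[OF nr]]) (auto simp: infsum_nonneg)
  have diag: "(\<lambda>i. \<Sum>k. f k i) = (\<lambda>i. rep_op x y i i)" by (simp add: f_def rep_op_def)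
  show "(\<lambda>i. rep_op x y i i) summable_on S" using infsum_suminf_swap(1)[OF row norms] diag by simp
  show tr: "trace S (rep_op x y) = (\<Sum>k. l2_inner S (y k) (x k))"
    using infsum_suminf_swap(2)[OF row norms] diag by (simp add: trace_def f_def l2_inner_def mult.commute)
  have bound: "norm (l2_inner S (y k) (x k)) \<le> l2norm S (x k) * l2norm S (y k)" for k
    using norm_l2_inner_le[OF nuclear_repD(2,1)[OF nr]] by (simp add: mult.commute)
  have summable: "summable (\<lambda>k. norm (l2_inner S (y k) (x k)))"
    by (rule summable_comparison_test[OF _ nuclear_repD(3)[OF nr]]) (use bound in auto)
  have "cmod (\<Sum>k. l2_inner S (y k) (x k)) \<le> (\<Sum>k. norm (l2_inner S (y k) (x k)))"
    by (rule summable_norm[OF summable])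
  also have "\<dots> \<le> (\<Sum>k. l2norm S (x k) * l2norm S (y k))"
    by (rule suminf_le[OF bound summable nuclear_repD(3)[OF nr]])
  finally show "cmod (trace S (rep_op x y)) \<le> (\<Sum>k. l2norm S (x k) * l2norm S (y k))"
    using tr by simp
qed

lemma rep_op_apply_summable:
  assumes nr: "nuclear_rep S x y" and v: "v \<in> l2 S"
  shows "(\<lambda>j. rep_op x y i j * v j) summable_on S"
    and "infsum (\<lambda>j. rep_op x y i j * v j) S = (\<Sum>k. x k i * l2_inner S (y k) v)"
proof -
  define f where "f = (\<lambda>k j. x k i * (cnj (y k j) * v j))"
  have row: "(\<lambda>j. norm (f k j)) summable_on S" for k
    using summable_on_cmult_right[OF l2_mult_summable[OF nuclear_repD(2)[OF nr] v], where c="norm (x k i)"]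
    by (simp add: f_def norm_mult)
  have bound: "infsum (\<lambda>j. norm (f k j)) S \<le> l2norm S (x k) * l2norm S (y k) * l2norm S v" for k
  proof -
    have "infsum (\<lambda>j. norm (f k j)) S = norm (x k i) * infsum (\<lambda>j. cmod (y k j) * cmod (v j)) S"
      by (simp add: f_def norm_mult infsum_cmult_right')
    also have "\<dots> \<le> l2norm S (x k) * (l2norm S (y k) * l2norm S v)"
      by (intro mult_mono norm_le_l2norm nuclear_repD[OF nr] l2_mult_infsum_le[OF nuclear_repD(2)[OF nr] v]
          l2norm_nonneg) (auto intro: infsum_nonneg)
    finally show ?thesis by (simp add: mult.assoc)
  qed
  have norms: "summable (\<lambda>k. infsum (\<lambda>j. norm (f k j)) S)"
    by (rule summable_comparison_test[OF _ summable_mult2[OF nuclear_repD(3)[OF nr], of "l2norm S v"]])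
       (use bound in \<open>auto simp: infsum_nonneg\<close>)
  have columns: "(\<lambda>j. \<Sum>k. f k j) = (\<lambda>j. rep_op x y i j * v j)"
  proof
    fix j
    have "(\<Sum>k. f k j) = (\<Sum>k. x k i * cnj (y k j)) * v j"
      unfolding f_def mult.assoc[symmetric]
      by (rule suminf_mult2[symmetric]) (rule summable_norm_cancel[OF nuclear_rep_entry_summable[OF nr]])
    then show "(\<Sum>k. f k j) = rep_op x y i j * v j" by (simp add: rep_op_def)
  qed
  show "(\<lambda>j. rep_op x y i j * v j) summable_on S" using infsum_suminf_swap(1)[OF row norms] columns by simp
  show "infsum (\<lambda>j. rep_op x y i j * v j) S = (\<Sum>k. x k i * l2_inner S (y k) v)"
    using infsum_suminf_swap(2)[OF row norms] columns by (simp add: f_def l2_inner_def infsum_cmult_right')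
qed

lemma rep_op_apply_series_summable:
  assumes nr: "nuclear_rep S x y" and v: "v \<in> l2 S"
  shows "summable (\<lambda>k. x k i * l2_inner S (y k) v)"
proof (rule summable_norm_cancel, rule summable_comparison_test[OF _ summable_mult2[OF nuclear_repD(3)[OF nr], of "l2norm S v"]])
  show "\<exists>N. \<forall>k\<ge>N. norm (norm (x k i * l2_inner S (y k) v)) \<le> l2norm S (x k) * l2norm S (y k) * l2norm S v"
    using norm_l2_inner_le[OF nuclear_repD(2)[OF nr] v]
    by (auto simp: norm_mult mult.assoc intro!: mult_mono norm_le_l2norm nuclear_repD[OF nr] l2norm_nonneg)
qed

lemma qform_rep_op:
  assumes nr: "nuclear_rep S x y" and v: "v \<in> l2 S"
  shows "(\<lambda>i. cnj (v i) * infsum (\<lambda>j. rep_op x y i j * v j) S) summable_on S"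
    and "qform S (rep_op x y) v = (\<Sum>k. l2_inner S v (x k) * l2_inner S (y k) v)"
proof -
  define c where "c = (\<lambda>k. l2_inner S (y k) v)"
  have c_bound: "norm (c k) \<le> l2norm S (y k) * l2norm S v" for k
    unfolding c_def by (rule norm_l2_inner_le[OF nuclear_repD(2)[OF nr] v])
  define f where "f = (\<lambda>k i. (cnj (v i) * x k i) * c k)"
  have row: "(\<lambda>i. norm (f k i)) summable_on S" for k
    using summable_on_cmult_left[OF l2_mult_summable[OF v nuclear_repD(1)[OF nr]], where c="norm (c k)"]
    by (simp add: f_def norm_mult)
  have bound: "infsum (\<lambda>i. norm (f k i)) S
      \<le> l2norm S (x k) * l2norm S (y k) * (l2norm S v * l2norm S v)" for k
  proof -
    have "infsum (\<lambda>i. norm (f k i)) S = infsum (\<lambda>i. cmod (v i) * cmod (x k i)) S * norm (c k)"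
      by (simp add: f_def norm_mult infsum_cmult_left')
    also have "\<dots> \<le> (l2norm S v * l2norm S (x k)) * (l2norm S (y k) * l2norm S v)"
      by (intro mult_mono c_bound l2_mult_infsum_le[OF v nuclear_repD(1)[OF nr]])
         (auto intro!: mult_nonneg_nonneg l2norm_nonneg)
    finally show ?thesis by (simp add: algebra_simps)
  qed
  have norms: "summable (\<lambda>k. infsum (\<lambda>i. norm (f k i)) S)"
    by (rule summable_comparison_test[OF _ summable_mult2[OF nuclear_repD(3)[OF nr]]])
       (use bound in \<open>auto simp: infsum_nonneg\<close>)
  have columns: "(\<lambda>i. \<Sum>k. f k i) = (\<lambda>i. cnj (v i) * infsum (\<lambda>j. rep_op x y i j * v j) S)"
  proof
    fix i
    have "summable (\<lambda>k. x k i * c k)"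
      unfolding c_def by (rule rep_op_apply_series_summable[OF nr v])
    then have "(\<Sum>k. f k i) = cnj (v i) * (\<Sum>k. x k i * c k)"
      unfolding f_def mult.assoc by (rule suminf_mult)
    then show "(\<Sum>k. f k i) = cnj (v i) * infsum (\<lambda>j. rep_op x y i j * v j) S"
      by (simp add: rep_op_apply_summable(2)[OF nr v] c_def)
  qed
  show "(\<lambda>i. cnj (v i) * infsum (\<lambda>j. rep_op x y i j * v j) S) summable_on S"
    using infsum_suminf_swap(1)[OF row norms] columns by simp
  show "qform S (rep_op x y) v = (\<Sum>k. l2_inner S v (x k) * l2_inner S (y k) v)"
  proof -
    have "infsum (f k) S = l2_inner S v (x k) * c k" for k
      by (simp add: f_def l2_inner_def infsum_cmult_left')
    then show ?thesis
      using infsum_suminf_swap(2)[OF row norms] columns by (simp add: qform_def c_def)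
  qed
qed

definition interleave :: "(nat \<Rightarrow> 'b) \<Rightarrow> (nat \<Rightarrow> 'b) \<Rightarrow> nat \<Rightarrow> 'b" where
  "interleave p q m = (if even m then p (m div 2) else q (m div 2))"

lemma sums_interleave:
  fixes p q :: "nat \<Rightarrow> 'b::real_normed_vector"
  assumes "p sums a" "q sums b"
  shows "interleave p q sums (a + b)"
proof -
  define P where "P = (\<lambda>m. if even m then p (m div 2) else 0)"
  define Q where "Q = (\<lambda>m. if odd m then q (m div 2) else 0)"
  have "(\<lambda>n. P (2 * n)) sums a \<longleftrightarrow> P sums a"
  proof (rule sums_mono_reindex)
    show "strict_mono (\<lambda>n::nat. 2 * n)" by (simp add: strict_mono_def)
    fix n assume "n \<notin> range (\<lambda>n::nat. 2 * n)"
    then show "P n = 0" by (auto simp: P_def)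
  qed
  then have P: "P sums a" using assms(1) by (simp add: P_def)
  have "(\<lambda>n. Q (2 * n + 1)) sums b \<longleftrightarrow> Q sums b"
  proof (rule sums_mono_reindex)
    show "strict_mono (\<lambda>n::nat. 2 * n + 1)" by (simp add: strict_mono_def)
    fix n assume "n \<notin> range (\<lambda>n::nat. 2 * n + 1)"
    then show "Q n = 0" by (metis Q_def oddE rangeI)
  qed
  then have Q: "Q sums b" using assms(2) by (simp add: Q_def)
  have "interleave p q = (\<lambda>m. P m + Q m)" by (auto simp: interleave_def P_def Q_def)
  then show ?thesis using sums_add[OF P Q] by simp
qed

lemma nuclear_rep_interleave:
  assumes nr1: "nuclear_rep S x y" and nr2: "nuclear_rep S x' y'"
  shows "nuclear_rep S (interleave x x') (interleave y y')"
    and "rep_op (interleave x x') (interleave y y') = (\<lambda>i j. rep_op x y i j + rep_op x' y' i j)"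
    and "(\<Sum>k. l2norm S (interleave x x' k) * l2norm S (interleave y y' k)) =
         (\<Sum>k. l2norm S (x k) * l2norm S (y k)) + (\<Sum>k. l2norm S (x' k) * l2norm S (y' k))"
proof -
  have norms: "(\<lambda>k. l2norm S (interleave x x' k) * l2norm S (interleave y y' k)) =
      interleave (\<lambda>k. l2norm S (x k) * l2norm S (y k)) (\<lambda>k. l2norm S (x' k) * l2norm S (y' k))"
    by (auto simp: interleave_def)
  have sums: "(\<lambda>k. l2norm S (interleave x x' k) * l2norm S (interleave y y' k)) sums
     ((\<Sum>k. l2norm S (x k) * l2norm S (y k)) + (\<Sum>k. l2norm S (x' k) * l2norm S (y' k)))"
    unfolding norms by (intro sums_interleave summable_sums nuclear_repD[OF nr1] nuclear_repD[OF nr2])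
  have "interleave x x' k \<in> l2 S \<and> interleave y y' k \<in> l2 S" for k
    using nuclear_repD[OF nr1] nuclear_repD[OF nr2] by (auto simp: interleave_def)
  then show "nuclear_rep S (interleave x x') (interleave y y')"
    using sums by (auto simp: nuclear_rep_def sums_iff)
  show "(\<Sum>k. l2norm S (interleave x x' k) * l2norm S (interleave y y' k)) =
         (\<Sum>k. l2norm S (x k) * l2norm S (y k)) + (\<Sum>k. l2norm S (x' k) * l2norm S (y' k))"
    using sums by (simp add: sums_iff)
  show "rep_op (interleave x x') (interleave y y') = (\<lambda>i j. rep_op x y i j + rep_op x' y' i j)"
  proof (intro ext)
    fix i j
    have entries: "(\<lambda>k. interleave x x' k i * cnj (interleave y y' k j)) =
        interleave (\<lambda>k. x k i * cnj (y k j)) (\<lambda>k. x' k i * cnj (y' k j))"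
      by (auto simp: interleave_def)
    have "(\<lambda>k. interleave x x' k i * cnj (interleave y y' k j)) sums (rep_op x y i j + rep_op x' y' i j)"
      unfolding entries rep_op_def
      by (intro sums_interleave summable_sums
          nuclear_rep_entry_summable[OF nr1, THEN summable_norm_cancel]
          nuclear_rep_entry_summable[OF nr2, THEN summable_norm_cancel])
    then show "rep_op (interleave x x') (interleave y y') i j = rep_op x y i j + rep_op x' y' i j"
      by (simp add: sums_iff rep_op_def)
  qed
qed

lemma nuclear_rep_scaleC:
  assumes nr: "nuclear_rep S x y"
  shows "nuclear_rep S (\<lambda>k i. c * x k i) y"
    and "rep_op (\<lambda>k i. c * x k i) y = (\<lambda>i j. c * rep_op x y i j)"
proof -
  have "(\<lambda>k. l2norm S (\<lambda>i. c * x k i) * l2norm S (y k)) = (\<lambda>k. cmod c * (l2norm S (x k) * l2norm S (y k)))"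
    using l2_scaleC(2)[OF nuclear_repD(1)[OF nr]] by (simp add: mult.assoc)
  then show "nuclear_rep S (\<lambda>k i. c * x k i) y"
    using nuclear_repD[OF nr] l2_scaleC(1)[OF nuclear_repD(1)[OF nr]] unfolding nuclear_rep_def
    by (auto intro: summable_mult)
  show "rep_op (\<lambda>k i. c * x k i) y = (\<lambda>i j. c * rep_op x y i j)"
    unfolding rep_op_def
    by (intro ext) (simp add: mult.assoc suminf_mult[OF summable_norm_cancel[OF nuclear_rep_entry_summable[OF nr]]])
qed

section \<open>The trace class\<close>

lemma trace_class_add:
  assumes "M \<in> trace_class S" "N \<in> trace_class S"
  shows "(\<lambda>i j. M i j + N i j) \<in> trace_class S"
proof -
  obtain x y x' y' where nr: "nuclear_rep S x y" "nuclear_rep S x' y'" and "M = rep_op x y" "N = rep_op x' y'"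
    using assms by (auto simp: trace_class_def)
  then have "(\<lambda>i j. M i j + N i j) = rep_op (interleave x x') (interleave y y')"
    by (simp add: nuclear_rep_interleave(2))
  with nuclear_rep_interleave(1)[OF nr] show ?thesis by (auto simp: trace_class_def)
qed

lemma trace_class_scaleC:
  assumes "M \<in> trace_class S"
  shows "(\<lambda>i j. c * M i j) \<in> trace_class S"
proof -
  obtain x y where nr: "nuclear_rep S x y" and "M = rep_op x y"
    using assms by (auto simp: trace_class_def)
  then have "(\<lambda>i j. c * M i j) = rep_op (\<lambda>k i. c * x k i) y"
    by (simp add: nuclear_rep_scaleC(2))
  with nuclear_rep_scaleC(1)[OF nr] show ?thesis by (auto simp: trace_class_def)
qed

lemma trace_class_diff:
  assumes "M \<in> trace_class S" "N \<in> trace_class S"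
  shows "(\<lambda>i j. M i j - N i j) \<in> trace_class S"
  using trace_class_add[OF assms(1) trace_class_scaleC[OF assms(2), of "-1"]] by simp

lemma trace_class_zero: "(\<lambda>i j. 0) \<in> trace_class S"
proof -
  have "nuclear_rep S (\<lambda>k i. 0) (\<lambda>k i. 0)"
    using l2_finite_support[of "{}" S "\<lambda>i. 0"] by (simp add: nuclear_rep_def)
  moreover have "(\<lambda>i j. 0) = rep_op (\<lambda>k i. 0) (\<lambda>k i. 0)" by (simp add: rep_op_def)
  ultimately show ?thesis by (auto simp: trace_class_def)
qed

lemma trace_class_sum:
  "finite I \<Longrightarrow> (\<And>p. p \<in> I \<Longrightarrow> M p \<in> trace_class S) \<Longrightarrow> (\<lambda>i j. \<Sum>p\<in>I. M p i j) \<in> trace_class S"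
proof (induction I rule: finite_induct)
  case (insert p I)
  then show ?case using trace_class_add[of "M p" S "\<lambda>i j. \<Sum>p\<in>I. M p i j"] by simp
qed (simp add: trace_class_zero)

lemma trace_diag_summable: "M \<in> trace_class S \<Longrightarrow> (\<lambda>i. M i i) summable_on S"
  by (auto simp: trace_class_def intro: trace_rep_op(1))

lemma trace_add:
  "M \<in> trace_class S \<Longrightarrow> N \<in> trace_class S \<Longrightarrow> trace S (\<lambda>i j. M i j + N i j) = trace S M + trace S N"
  unfolding trace_def by (intro infsum_add trace_diag_summable)

lemma trace_scaleC: "trace S (\<lambda>i j. c * M i j) = c * trace S M"
  unfolding trace_def by (rule infsum_cmult_right')

lemma trace_diff:
  assumes "M \<in> trace_class S" "N \<in> trace_class S"
  shows "trace S (\<lambda>i j. M i j - N i j) = trace S M - trace S N"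
  using trace_add[OF assms(1) trace_class_scaleC[OF assms(2), of "-1"]] trace_scaleC[of S "-1" N] by simp

lemma trace_lincomb:
  "finite I \<Longrightarrow> (\<And>p. p \<in> I \<Longrightarrow> M p \<in> trace_class S) \<Longrightarrow>
    trace S (\<lambda>i j. \<Sum>p\<in>I. c p * M p i j) = (\<Sum>p\<in>I. c p * trace S (M p))"
proof (induction I rule: finite_induct)
  case (insert p I)
  have "trace S (\<lambda>i j. c p * M p i j + (\<Sum>p\<in>I. c p * M p i j))
      = trace S (\<lambda>i j. c p * M p i j) + trace S (\<lambda>i j. \<Sum>p\<in>I. c p * M p i j)"
    using insert by (intro trace_add trace_class_scaleC) (auto intro!: trace_class_sum trace_class_scaleC)
  with insert show ?case by (simp add: trace_scaleC)
qed (simp add: trace_def)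

lemma Im_trace_eq_zero:
  assumes "M \<in> trace_class S" "\<And>i. i \<in> S \<Longrightarrow> Im (M i i) = 0"
  shows "Im (trace S M) = 0"
proof -
  have "Im (trace S M) = infsum (\<lambda>i. Im (M i i)) S"
    unfolding trace_def by (rule infsum_Im[OF trace_diag_summable[OF assms(1)], symmetric])
  also have "\<dots> = 0" using assms(2) by (simp add: infsum_0)
  finally show ?thesis .
qed

lemma nuclear_rep_norm_sum_nonneg: "nuclear_rep S x y \<Longrightarrow> 0 \<le> (\<Sum>k. l2norm S (x k) * l2norm S (y k))"
  by (intro suminf_nonneg nuclear_repD mult_nonneg_nonneg l2norm_nonneg)

lemma trace_norm_le_rep:
  assumes "nuclear_rep S x y" "M = rep_op x y"
  shows "trace_norm S M \<le> (\<Sum>k. l2norm S (x k) * l2norm S (y k))"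
  unfolding trace_norm_def
proof (rule cInf_lower)
  show "bdd_below {\<Sum>k. l2norm S (x k) * l2norm S (y k) |x y. nuclear_rep S x y \<and> M = rep_op x y}"
    by (rule bdd_belowI[of _ 0]) (auto intro: nuclear_rep_norm_sum_nonneg)
qed (use assms in auto)

lemma trace_norm_greatest:
  assumes "M \<in> trace_class S"
    and "\<And>x y. nuclear_rep S x y \<Longrightarrow> M = rep_op x y \<Longrightarrow> c \<le> (\<Sum>k. l2norm S (x k) * l2norm S (y k))"
  shows "c \<le> trace_norm S M"
  unfolding trace_norm_def by (rule cInf_greatest) (use assms in \<open>auto simp: trace_class_def\<close>)

lemma trace_norm_nonneg: "M \<in> trace_class S \<Longrightarrow> 0 \<le> trace_norm S M"
  by (rule trace_norm_greatest) (auto intro: nuclear_rep_norm_sum_nonneg)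

lemma norm_trace_le_trace_norm: "M \<in> trace_class S \<Longrightarrow> cmod (trace S M) \<le> trace_norm S M"
  by (rule trace_norm_greatest) (simp_all add: trace_rep_op(3))

lemma trace_norm_approx:
  assumes "M \<in> trace_class S" "e > 0"
  obtains x y where "nuclear_rep S x y" "M = rep_op x y"
    "(\<Sum>k. l2norm S (x k) * l2norm S (y k)) < trace_norm S M + e"
proof -
  have "\<exists>z\<in>{\<Sum>k. l2norm S (x k) * l2norm S (y k) |x y. nuclear_rep S x y \<and> M = rep_op x y}.
      z < trace_norm S M + e"
    unfolding trace_norm_def
    by (rule cInf_lessD) (use assms in \<open>auto simp: trace_class_def trace_norm_def\<close>)
  then show ?thesis using that by blast
qed

lemma trace_norm_triangle:
  assumes M: "M \<in> trace_class S" and N: "N \<in> trace_class S"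
  shows "trace_norm S (\<lambda>i j. M i j + N i j) \<le> trace_norm S M + trace_norm S N"
proof (rule field_le_epsilon)
  fix e :: real assume "e > 0"
  then have "e / 2 > 0" by simp
  obtain x y where xy: "nuclear_rep S x y" "M = rep_op x y"
      "(\<Sum>k. l2norm S (x k) * l2norm S (y k)) < trace_norm S M + e/2"
    using trace_norm_approx[OF M \<open>e / 2 > 0\<close>] by blast
  obtain x' y' where xy': "nuclear_rep S x' y'" "N = rep_op x' y'"
      "(\<Sum>k. l2norm S (x' k) * l2norm S (y' k)) < trace_norm S N + e/2"
    using trace_norm_approx[OF N \<open>e / 2 > 0\<close>] by blast
  have "trace_norm S (\<lambda>i j. M i j + N i j)
      \<le> (\<Sum>k. l2norm S (interleave x x' k) * l2norm S (interleave y y' k))"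
    by (rule trace_norm_le_rep[OF nuclear_rep_interleave(1)[OF xy(1) xy'(1)]])
       (simp add: nuclear_rep_interleave(2)[OF xy(1) xy'(1)] xy(2) xy'(2))
  also have "\<dots> < trace_norm S M + trace_norm S N + e"
    using xy(3) xy'(3) by (simp add: nuclear_rep_interleave(3)[OF xy(1) xy'(1)])
  finally show "trace_norm S (\<lambda>i j. M i j + N i j) \<le> trace_norm S M + trace_norm S N + e" by simp
qed

definition matrix_unit :: "'a \<Rightarrow> 'a \<Rightarrow> complex \<Rightarrow> 'a \<Rightarrow> 'a \<Rightarrow> complex" where
  "matrix_unit p q c = (\<lambda>s s'. if s = p \<and> s' = q then c else 0)"

lemma trace_class_matrix_unit:
  assumes "p \<in> S" "q \<in> S"
  shows "matrix_unit p q c \<in> trace_class S" "trace_norm S (matrix_unit p q c) \<le> cmod c"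
proof -
  define x where "x = (\<lambda>k::nat. \<lambda>s. if k = 0 \<and> s = p then c else 0)"
  define y where "y = (\<lambda>k::nat. \<lambda>s. if k = 0 \<and> s = q then (1::complex) else 0)"
  have x: "x k \<in> l2 S" "l2norm S (x k) = (if k = 0 then cmod c else 0)" for k
    using l2_finite_support[of "{p}" S "x k"] assms by (auto simp: x_def)
  have y: "y k \<in> l2 S" "l2norm S (y k) = (if k = 0 then 1 else 0)" for k
    using l2_finite_support[of "{q}" S "y k"] assms by (auto simp: y_def)
  have norms: "(\<lambda>k. l2norm S (x k) * l2norm S (y k)) = (\<lambda>k. if k = 0 then cmod c else 0)"
    using x y by auto
  have nr: "nuclear_rep S x y"
    unfolding nuclear_rep_def norms using x y by (auto intro: summable_finite[of "{0}"])
  have rep: "matrix_unit p q c = rep_op x y"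
  proof (intro ext)
    fix s s'
    have "rep_op x y s s' = (\<Sum>k\<in>{0}. x k s * cnj (y k s'))"
      unfolding rep_op_def by (rule suminf_finite) (auto simp: x_def)
    then show "matrix_unit p q c s s' = rep_op x y s s'" by (simp add: matrix_unit_def x_def y_def)
  qed
  show "matrix_unit p q c \<in> trace_class S" using nr rep by (auto simp: trace_class_def)
  have "(\<Sum>k. l2norm S (x k) * l2norm S (y k)) = cmod c"
    unfolding norms by (subst suminf_finite[of "{0}"]) auto
  then show "trace_norm S (matrix_unit p q c) \<le> cmod c" using trace_norm_le_rep[OF nr rep] by simp
qed

lemma trace_matrix_unit: "p \<in> S \<Longrightarrow> trace S (matrix_unit p p c) = c"
proof -
  assume "p \<in> S"
  then have "trace S (matrix_unit p p c) = infsum (\<lambda>s. matrix_unit p p c s s) {p}"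
    unfolding trace_def by (intro infsum_cong_neutral) (auto simp: matrix_unit_def)
  then show ?thesis by (simp add: matrix_unit_def)
qed

lemma trace_class_finite:
  assumes "finite S" "\<And>p q. p \<notin> S \<or> q \<notin> S \<Longrightarrow> M p q = 0"
  shows "M \<in> trace_class S"
proof -
  have "M s s' = (\<Sum>r\<in>S \<times> S. matrix_unit (fst r) (snd r) (M (fst r) (snd r)) s s')" for s s'
  proof -
    have "(\<Sum>r\<in>S \<times> S. matrix_unit (fst r) (snd r) (M (fst r) (snd r)) s s')
        = (\<Sum>r\<in>S \<times> S. if r = (s, s') then M s s' else 0)"
      by (intro sum.cong) (auto simp: matrix_unit_def)
    also have "\<dots> = M s s'" using assms by (simp add: sum.delta')
    finally show ?thesis ..
  qed
  then have "M = (\<lambda>s s'. \<Sum>r\<in>S \<times> S. matrix_unit (fst r) (snd r) (M (fst r) (snd r)) s s')"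
    by blast
  also have "\<dots> \<in> trace_class S"
    using assms(1) by (intro trace_class_sum trace_class_matrix_unit) auto
  finally show ?thesis .
qed

lemma qform_finite_support:
  assumes "finite F" "F \<subseteq> S" "\<And>p. p \<notin> F \<Longrightarrow> v p = 0"
  shows "qform S M v = (\<Sum>p\<in>F. cnj (v p) * (\<Sum>q\<in>F. M p q * v q))"
proof -
  have inner: "infsum (\<lambda>q. M p q * v q) S = (\<Sum>q\<in>F. M p q * v q)" for p
  proof -
    have "infsum (\<lambda>q. M p q * v q) S = infsum (\<lambda>q. M p q * v q) F"
      by (rule infsum_cong_neutral) (use assms in auto)
    then show ?thesis using assms(1) by simp
  qed
  have "qform S M v = infsum (\<lambda>p. cnj (v p) * (\<Sum>q\<in>F. M p q * v q)) S"
    unfolding qform_def inner ..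
  also have "\<dots> = infsum (\<lambda>p. cnj (v p) * (\<Sum>q\<in>F. M p q * v q)) F"
    by (rule infsum_cong_neutral) (use assms in auto)
  finally show ?thesis using assms(1) by simp
qed

lemma positive_tc_finite:
  assumes "finite S" "\<And>p q. p \<notin> S \<or> q \<notin> S \<Longrightarrow> M p q = 0"
    and "\<And>v. Im (\<Sum>p\<in>S. cnj (v p) * (\<Sum>q\<in>S. M p q * v q)) = 0"
    and "\<And>v. Re (\<Sum>p\<in>S. cnj (v p) * (\<Sum>q\<in>S. M p q * v q)) \<ge> 0"
  shows "positive_tc S M"
proof -
  have "qform S M v = (\<Sum>p\<in>S. cnj (v p) * (\<Sum>q\<in>S. M p q * v q))" if "v \<in> l2 S" for v
    by (rule qform_finite_support[OF assms(1) order_refl]) (use that in \<open>simp add: l2_vanishes\<close>)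
  then show ?thesis using trace_class_finite[OF assms(1,2)] assms(3,4) by (simp add: positive_tc_def)
qed

lemma positive_tc_diag:
  assumes "positive_tc S M" "i \<in> S"
  shows "Im (M i i) = 0"
proof -
  define e where "e = (\<lambda>j. if j = i then 1 else 0 :: complex)"
  have "e \<in> l2 S" by (rule l2_finite_support(1)[of "{i}"]) (use assms(2) in \<open>auto simp: e_def\<close>)
  moreover have "qform S M e = M i i"
    using qform_finite_support[of "{i}" S e M] assms(2) by (simp add: e_def)
  ultimately show ?thesis using assms(1) by (auto simp: positive_tc_def)
qed

lemma Im_trace_positive_tc: "positive_tc S M \<Longrightarrow> Im (trace S M) = 0"
  by (rule Im_trace_eq_zero) (auto simp: positive_tc_def intro: positive_tc_diag)

lemma qform_summable:
  assumes "M \<in> trace_class S" "v \<in> l2 S"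
  shows "(\<lambda>j. M i j * v j) summable_on S"
    and "(\<lambda>i. cnj (v i) * infsum (\<lambda>j. M i j * v j) S) summable_on S"
  using assms rep_op_apply_summable(1) qform_rep_op(1) by (auto simp: trace_class_def)

lemma qform_add:
  assumes "M \<in> trace_class S" "N \<in> trace_class S" "v \<in> l2 S"
  shows "qform S (\<lambda>i j. M i j + N i j) v = qform S M v + qform S N v"
proof -
  have "infsum (\<lambda>j. (M i j + N i j) * v j) S = infsum (\<lambda>j. M i j * v j) S + infsum (\<lambda>j. N i j * v j) S" for i
    using infsum_add[OF qform_summable(1)[OF assms(1,3)] qform_summable(1)[OF assms(2,3)]]
    by (simp add: distrib_right)
  then show ?thesis
    using infsum_add[OF qform_summable(2)[OF assms(1,3)] qform_summable(2)[OF assms(2,3)]]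
    by (simp add: qform_def distrib_left)
qed

lemma positive_tc_add:
  assumes "positive_tc S M" "positive_tc S N"
  shows "positive_tc S (\<lambda>i j. M i j + N i j)"
  unfolding positive_tc_def
proof (intro conjI ballI)
  have tc: "M \<in> trace_class S" "N \<in> trace_class S" using assms by (simp_all add: positive_tc_def)
  then show "(\<lambda>i j. M i j + N i j) \<in> trace_class S" by (rule trace_class_add)
  fix v assume v: "v \<in> l2 S"
  have "qform S (\<lambda>i j. M i j + N i j) v = qform S M v + qform S N v" by (rule qform_add[OF tc v])
  then show "Im (qform S (\<lambda>i j. M i j + N i j) v) = 0" "0 \<le> Re (qform S (\<lambda>i j. M i j + N i j) v)"
    using assms v by (auto simp: positive_tc_def)
qed

section \<open>Transport along injections\<close>

lemma l2_pullback:
  assumes x: "x \<in> l2 S" and g: "inj g" "g -` S = T"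
  shows "(\<lambda>t. x (g t)) \<in> l2 T" "l2norm T (\<lambda>t. x (g t)) \<le> l2norm S x"
proof -
  let ?f = "\<lambda>s. (cmod (x s))^2"
  have image: "g ` T \<subseteq> S" using g(2) by auto
  have on_image: "?f summable_on g ` T"
    by (rule summable_on_subset_banach[OF l2_summable[OF x] image])
  then have "(?f \<circ> g) summable_on T"
    using summable_on_reindex[OF inj_on_subset[OF g(1) subset_UNIV]] by blast
  then show "(\<lambda>t. x (g t)) \<in> l2 T"
    by (intro l2I) (use g(2) l2_vanishes[OF x] in \<open>auto simp: comp_def\<close>)
  have "infsum (?f \<circ> g) T = infsum ?f (g ` T)"
    by (rule infsum_reindex[OF inj_on_subset[OF g(1) subset_UNIV], symmetric])
  also have "\<dots> \<le> infsum ?f S"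
    by (rule infsum_mono_neutral[OF on_image l2_summable[OF x]]) (use image in auto)
  finally show "l2norm T (\<lambda>t. x (g t)) \<le> l2norm S x"
    unfolding l2norm_def by (simp add: comp_def)
qed

lemma trace_class_pullback:
  assumes M: "M \<in> trace_class S" and g: "inj g" "g -` S = T" and h: "inj h" "h -` S = T"
  shows "(\<lambda>t t'. M (g t) (h t')) \<in> trace_class T"
    and "trace_norm T (\<lambda>t t'. M (g t) (h t')) \<le> trace_norm S M"
proof -
  have pulled_rep: "nuclear_rep T (\<lambda>k t. x k (g t)) (\<lambda>k t. y k (h t))
      \<and> (\<lambda>t t'. M (g t) (h t')) = rep_op (\<lambda>k t. x k (g t)) (\<lambda>k t. y k (h t))
      \<and> trace_norm T (\<lambda>t t'. M (g t) (h t')) \<le> (\<Sum>k. l2norm S (x k) * l2norm S (y k))"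
    if nr: "nuclear_rep S x y" and rep: "M = rep_op x y" for x y
  proof -
    let ?a = "\<lambda>k. l2norm T (\<lambda>t. x k (g t)) * l2norm T (\<lambda>t. y k (h t))"
    have le: "?a k \<le> l2norm S (x k) * l2norm S (y k)" for k
      by (intro mult_mono l2_pullback(2)[OF _ g] l2_pullback(2)[OF _ h] nuclear_repD[OF nr] l2norm_nonneg)
    have summable: "summable ?a"
      by (rule summable_comparison_test[OF _ nuclear_repD(3)[OF nr]])
         (use le in \<open>auto simp: abs_mult l2norm_nonneg\<close>)
    have nr': "nuclear_rep T (\<lambda>k t. x k (g t)) (\<lambda>k t. y k (h t))"
      unfolding nuclear_rep_def
      using summable l2_pullback(1)[OF nuclear_repD(1)[OF nr] g] l2_pullback(1)[OF nuclear_repD(2)[OF nr] h]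
      by auto
    have rep': "(\<lambda>t t'. M (g t) (h t')) = rep_op (\<lambda>k t. x k (g t)) (\<lambda>k t. y k (h t))"
      by (simp add: rep rep_op_def)
    have "trace_norm T (\<lambda>t t'. M (g t) (h t')) \<le> (\<Sum>k. ?a k)"
      by (rule trace_norm_le_rep[OF nr' rep'])
    also have "\<dots> \<le> (\<Sum>k. l2norm S (x k) * l2norm S (y k))"
      by (rule suminf_le[OF le summable nuclear_repD(3)[OF nr]])
    finally show ?thesis using nr' rep' by blast
  qed
  obtain x y where "nuclear_rep S x y" "M = rep_op x y" using M by (auto simp: trace_class_def)
  from pulled_rep[OF this] show "(\<lambda>t t'. M (g t) (h t')) \<in> trace_class T"
    unfolding trace_class_def by blast
  show "trace_norm T (\<lambda>t t'. M (g t) (h t')) \<le> trace_norm S M"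
    by (rule trace_norm_greatest[OF M]) (use pulled_rep in blast)
qed

definition push_vec :: "('t \<Rightarrow> 's) \<Rightarrow> ('t \<Rightarrow> complex) \<Rightarrow> 's \<Rightarrow> complex" where
  "push_vec g x s = (if s \<in> range g then x (inv g s) else 0)"

definition push_op :: "('t \<Rightarrow> 's) \<Rightarrow> ('t \<Rightarrow> 't \<Rightarrow> complex) \<Rightarrow> 's \<Rightarrow> 's \<Rightarrow> complex" where
  "push_op g M s s' = (if s \<in> range g \<and> s' \<in> range g then M (inv g s) (inv g s') else 0)"

lemma push_op_apply: "inj g \<Longrightarrow> push_op g M (g t) (g t') = M t t'"
  by (simp add: push_op_def)

lemma l2_push_vec:
  assumes x: "x \<in> l2 T" and g: "inj g" "g -` S = T"
  shows "push_vec g x \<in> l2 S" "l2norm S (push_vec g x) = l2norm T x"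
proof -
  let ?f = "\<lambda>s. (cmod (push_vec g x s))^2"
  have inj: "inj_on g T" using g(1) by (rule inj_on_subset) simp
  have outside: "push_vec g x s = 0" if "s \<notin> g ` T" for s
    using that g l2_vanishes[OF x] by (auto simp: push_vec_def)
  have on_T: "(?f \<circ> g) = (\<lambda>t. (cmod (x t))^2)"
    using g(1) by (simp add: push_vec_def comp_def)
  have "?f summable_on g ` T"
    unfolding summable_on_reindex[OF inj] on_T by (rule l2_summable[OF x])
  moreover have "?f summable_on S \<longleftrightarrow> ?f summable_on g ` T"
    by (rule summable_on_cong_neutral) (use g(2) outside in auto)
  moreover have "push_vec g x s = 0" if "s \<notin> S" for s
    using that g(2) by (intro outside) auto
  ultimately show "push_vec g x \<in> l2 S" by (auto intro: l2I)
  have "infsum ?f S = infsum ?f (g ` T)"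
    by (rule infsum_cong_neutral) (use g(2) outside in auto)
  also have "\<dots> = infsum (?f \<circ> g) T" by (rule infsum_reindex[OF inj])
  also have "\<dots> = infsum (\<lambda>t. (cmod (x t))^2) T" unfolding on_T ..
  finally show "l2norm S (push_vec g x) = l2norm T x" by (simp add: l2norm_def)
qed

lemma trace_class_push_op:
  assumes M: "M \<in> trace_class T" and g: "inj g" "g -` S = T"
  shows "push_op g M \<in> trace_class S" "trace_norm S (push_op g M) \<le> trace_norm T M"
proof -
  have pushed_rep: "nuclear_rep S (\<lambda>k. push_vec g (x k)) (\<lambda>k. push_vec g (y k))
      \<and> push_op g M = rep_op (\<lambda>k. push_vec g (x k)) (\<lambda>k. push_vec g (y k))
      \<and> trace_norm S (push_op g M) \<le> (\<Sum>k. l2norm T (x k) * l2norm T (y k))"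
    if nr: "nuclear_rep T x y" and rep: "M = rep_op x y" for x y
  proof -
    have norms: "l2norm S (push_vec g (x k)) * l2norm S (push_vec g (y k)) = l2norm T (x k) * l2norm T (y k)" for k
      using l2_push_vec(2)[OF nuclear_repD(1)[OF nr] g] l2_push_vec(2)[OF nuclear_repD(2)[OF nr] g] by simp
    have nr': "nuclear_rep S (\<lambda>k. push_vec g (x k)) (\<lambda>k. push_vec g (y k))"
      unfolding nuclear_rep_def norms using nuclear_repD[OF nr] l2_push_vec(1)[OF _ g] by auto
    have rep': "push_op g M = rep_op (\<lambda>k. push_vec g (x k)) (\<lambda>k. push_vec g (y k))"
      by (intro ext) (auto simp: rep_op_def rep push_op_def push_vec_def)
    show ?thesis using nr' rep' trace_norm_le_rep[OF nr' rep'] by (simp add: norms)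
  qed
  obtain x y where "nuclear_rep T x y" "M = rep_op x y" using M by (auto simp: trace_class_def)
  from pushed_rep[OF this] show "push_op g M \<in> trace_class S"
    unfolding trace_class_def by blast
  show "trace_norm S (push_op g M) \<le> trace_norm T M"
    by (rule trace_norm_greatest[OF M]) (use pushed_rep in blast)
qed

lemma push_op_vanishes_off_image:
  assumes M: "M \<in> trace_class T" and "inj g" "s \<notin> g ` T"
  shows "push_op g M s s' = 0" "push_op g M s' s = 0"
proof -
  have "M t t' = 0" "M t' t = 0" if "s = g t" for t t'
    using that assms(3) by (auto intro!: trace_class_vanishes[OF M])
  then show "push_op g M s s' = 0" "push_op g M s' s = 0"
    using assms(2) by (auto simp: push_op_def)
qed

lemma trace_push_op:
  assumes M: "M \<in> trace_class T" and g: "inj g" "g -` S = T"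
  shows "trace S (push_op g M) = trace T M"
proof -
  have "trace S (push_op g M) = infsum (\<lambda>s. push_op g M s s) (g ` T)"
    unfolding trace_def
    by (rule infsum_cong_neutral) (use g(2) push_op_vanishes_off_image[OF M g(1)] in auto)
  also have "\<dots> = trace T M"
    using infsum_reindex[OF inj_on_subset[OF g(1) subset_UNIV], of "\<lambda>s. push_op g M s s" T] g(1)
    by (simp add: trace_def comp_def push_op_apply)
  finally show ?thesis .
qed

lemma qform_push_op:
  assumes M: "M \<in> trace_class T" and g: "inj g" "g -` S = T"
  shows "qform S (push_op g M) v = qform T M (\<lambda>t. v (g t))"
proof -
  have inj: "inj_on g T" using g(1) by (rule inj_on_subset) simp
  have inner: "infsum (\<lambda>s'. push_op g M (g t) s' * v s') S = infsum (\<lambda>t'. M t t' * v (g t')) T" for t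
  proof -
    have "infsum (\<lambda>s'. push_op g M (g t) s' * v s') S = infsum (\<lambda>s'. push_op g M (g t) s' * v s') (g ` T)"
      by (rule infsum_cong_neutral) (use g(2) push_op_vanishes_off_image(2)[OF M g(1)] in auto)
    also have "\<dots> = infsum (\<lambda>t'. M t t' * v (g t')) T"
      using infsum_reindex[OF inj, of "\<lambda>s'. push_op g M (g t) s' * v s'"]
      by (simp add: comp_def push_op_apply[OF g(1)])
    finally show ?thesis .
  qed
  have "qform S (push_op g M) v = infsum (\<lambda>s. cnj (v s) * infsum (\<lambda>s'. push_op g M s s' * v s') S) (g ` T)"
    unfolding qform_def
    by (rule infsum_cong_neutral) (use g(2) push_op_vanishes_off_image(1)[OF M g(1)] in auto)
  also have "\<dots> = qform T M (\<lambda>t. v (g t))"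
    using infsum_reindex[OF inj, of "\<lambda>s. cnj (v s) * infsum (\<lambda>s'. push_op g M s s' * v s') S"]
    by (simp add: qform_def comp_def inner)
  finally show ?thesis .
qed

lemma positive_tc_push_op:
  assumes M: "positive_tc T M" and g: "inj g" "g -` S = T"
  shows "positive_tc S (push_op g M)"
proof -
  have tc: "M \<in> trace_class T" using M by (simp add: positive_tc_def)
  show ?thesis
    using M trace_class_push_op(1)[OF tc g] l2_pullback(1)[OF _ g]
    by (auto simp: positive_tc_def qform_push_op[OF tc g])
qed

section \<open>Block operators on \<open>A \<times> {..<n}\<close>\<close>

definition tensor_vec :: "('a \<Rightarrow> complex) \<Rightarrow> (nat \<Rightarrow> complex) \<Rightarrow> nat \<Rightarrow> 'a \<times> nat \<Rightarrow> complex" where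
  "tensor_vec u a n = (\<lambda>(i, k). if k < n then u i * a k else 0)"

definition contract_vec :: "(nat \<Rightarrow> complex) \<Rightarrow> nat \<Rightarrow> ('a \<times> nat \<Rightarrow> complex) \<Rightarrow> 'a \<Rightarrow> complex" where
  "contract_vec a n z = (\<lambda>i. \<Sum>k<n. cnj (a k) * z (i, k))"

lemma l2_tensor_vec:
  assumes u: "u \<in> l2 A"
  shows "tensor_vec u a n \<in> l2 (A \<times> {..<n})"
proof (rule l2I)
  show "(\<lambda>p. (cmod (tensor_vec u a n p))^2) summable_on A \<times> {..<n}"
  proof (rule summable_on_SigmaI)
    show "((\<lambda>k. (cmod (tensor_vec u a n (i, k)))^2) has_sum (\<Sum>k<n. (cmod (tensor_vec u a n (i, k)))^2)) {..<n}" for i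
      by (rule has_sum_finite) simp
    have "(\<lambda>i. \<Sum>k<n. (cmod (tensor_vec u a n (i, k)))^2) = (\<lambda>i. (cmod (u i))^2 * (\<Sum>k<n. (cmod (a k))^2))"
      by (auto simp: tensor_vec_def norm_mult power_mult_distrib sum_distrib_left)
    then show "(\<lambda>i. \<Sum>k<n. (cmod (tensor_vec u a n (i, k)))^2) summable_on A"
      using summable_on_cmult_left[OF l2_summable[OF u]] by simp
  qed simp
next
  fix p assume "p \<notin> A \<times> {..<n}"
  then show "tensor_vec u a n p = 0" by (cases p) (auto simp: tensor_vec_def l2_vanishes[OF u])
qed

lemma l2_contract_vec:
  fixes n :: nat
  assumes z: "z \<in> l2 (A \<times> {..<n})"
  shows "contract_vec a n z \<in> l2 A"
    and "l2norm A (contract_vec a n z) \<le> (\<Sum>k<n. cmod (a k)) * l2norm (A \<times> {..<n}) z"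
proof -
  define K where "K = (\<Sum>k<n. cmod (a k))"
  define r where "r = (\<lambda>i. \<Sum>k<n. (cmod (z (i, k)))^2)"
  have K: "K \<ge> 0" by (simp add: K_def sum_nonneg)
  have summable_z: "(\<lambda>(i, k). (cmod (z (i, k)))^2) summable_on A \<times> {..<n}"
    using l2_summable[OF z] by (simp add: case_prod_unfold)
  have summable_r: "(\<lambda>i. K^2 * r i) summable_on A"
    using summable_on_cmult_right[OF summable_on_Sigma_banach[OF summable_z]] by (simp add: r_def)
  have pointwise: "(cmod (contract_vec a n z i))^2 \<le> K^2 * r i" for i
  proof -
    have "cmod (z (i, k)) \<le> sqrt (r i)" if "k < n" for k
      using member_le_sum[of k "{..<n}" "\<lambda>k. (cmod (z (i, k)))^2"] that
      by (simp add: r_def real_le_rsqrt)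
    then have "cmod (contract_vec a n z i) \<le> K * sqrt (r i)"
      unfolding contract_vec_def K_def sum_distrib_right
      by (intro order_trans[OF norm_sum] sum_mono) (simp add: norm_mult mult_left_mono)
    then have "(cmod (contract_vec a n z i))^2 \<le> (K * sqrt (r i))^2"
      by (intro power_mono) auto
    also have "\<dots> = K^2 * r i" by (simp add: power_mult_distrib r_def sum_nonneg)
    finally show ?thesis .
  qed
  have vanishes: "contract_vec a n z i = 0" if "i \<notin> A" for i
    using that by (simp add: contract_vec_def l2_vanishes[OF z])
  show "contract_vec a n z \<in> l2 A" by (rule l2_dominated(1)[OF vanishes summable_r pointwise])
  have "l2norm A (contract_vec a n z) \<le> sqrt (infsum (\<lambda>i. K^2 * r i) A)"
    by (rule l2_dominated(2)[OF vanishes summable_r pointwise])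
  also have "infsum (\<lambda>i. K^2 * r i) A = (K * l2norm (A \<times> {..<n}) z)^2"
    using infsum_Sigma'_banach[OF summable_z]
    by (simp add: infsum_cmult_right' r_def l2norm_squared power_mult_distrib case_prod_unfold)
  finally show "l2norm A (contract_vec a n z) \<le> (\<Sum>k<n. cmod (a k)) * l2norm (A \<times> {..<n}) z"
    using K l2norm_nonneg[of "A \<times> {..<n}" z] by (simp add: K_def)
qed

lemma l2_inner_tensor_vec:
  assumes u: "u \<in> l2 A" and z: "z \<in> l2 (A \<times> {..<n})"
  shows "l2_inner (A \<times> {..<n}) (tensor_vec u a n) z = l2_inner A u (contract_vec a n z)"
    and "l2_inner (A \<times> {..<n}) z (tensor_vec u a n) = l2_inner A (contract_vec a n z) u"
proof -
  have summable1: "(\<lambda>(i, k). cnj (tensor_vec u a n (i, k)) * z (i, k)) summable_on A \<times> {..<n}"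
    using l2_inner_summable[OF l2_tensor_vec[OF u] z] by (simp add: case_prod_unfold)
  have "l2_inner (A \<times> {..<n}) (tensor_vec u a n) z
      = infsum (\<lambda>i. infsum (\<lambda>k. cnj (tensor_vec u a n (i, k)) * z (i, k)) {..<n}) A"
    unfolding l2_inner_def using infsum_Sigma'_banach[OF summable1] by (simp add: case_prod_unfold)
  also have "\<dots> = l2_inner A u (contract_vec a n z)"
    unfolding l2_inner_def
    by (rule infsum_cong) (simp add: tensor_vec_def contract_vec_def sum_distrib_left mult.assoc)
  finally show "l2_inner (A \<times> {..<n}) (tensor_vec u a n) z = l2_inner A u (contract_vec a n z)" .
  have summable2: "(\<lambda>(i, k). cnj (z (i, k)) * tensor_vec u a n (i, k)) summable_on A \<times> {..<n}"
    using l2_inner_summable[OF z l2_tensor_vec[OF u]] by (simp add: case_prod_unfold)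
  have "l2_inner (A \<times> {..<n}) z (tensor_vec u a n)
      = infsum (\<lambda>i. infsum (\<lambda>k. cnj (z (i, k)) * tensor_vec u a n (i, k)) {..<n}) A"
    unfolding l2_inner_def using infsum_Sigma'_banach[OF summable2] by (simp add: case_prod_unfold)
  also have "\<dots> = l2_inner A (contract_vec a n z) u"
    unfolding l2_inner_def
    by (rule infsum_cong)
       (auto simp: tensor_vec_def contract_vec_def sum_distrib_left sum_distrib_right ac_simps intro!: sum.cong)
  finally show "l2_inner (A \<times> {..<n}) z (tensor_vec u a n) = l2_inner A (contract_vec a n z) u" .
qed

definition block :: "('a \<times> nat \<Rightarrow> 'a \<times> nat \<Rightarrow> complex) \<Rightarrow> nat \<Rightarrow> nat \<Rightarrow> 'a \<Rightarrow> 'a \<Rightarrow> complex" where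
  "block W k l = (\<lambda>i j. W (i, k) (j, l))"

lemma ampl_block: "ampl n \<Phi> W (i, k) (j, l) = (if k < n \<and> l < n then \<Phi> (block W k l) i j else 0)"
  by (simp add: ampl_def block_def)

lemma block_ampl: "k < n \<Longrightarrow> l < n \<Longrightarrow> block (ampl n \<Phi> W) k l = \<Phi> (block W k l)"
  by (simp add: block_def ampl_def)

lemma trace_class_block:
  assumes W: "W \<in> trace_class (A \<times> {..<n})" and "k < n" "l < n"
  shows "block W k l \<in> trace_class A"
  unfolding block_def
  by (rule trace_class_pullback(1)[OF W, where g="\<lambda>i. (i, k)" and h="\<lambda>j. (j, l)"])
     (use assms(2,3) in \<open>auto simp: inj_def\<close>)

(* For a vector a in C^n this is (1 (x) <a|) W (1 (x) |a>), an operator on l2(A). *)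
definition block_compression ::
    "('a \<times> nat \<Rightarrow> 'a \<times> nat \<Rightarrow> complex) \<Rightarrow> (nat \<Rightarrow> complex) \<Rightarrow> nat \<Rightarrow> 'a \<Rightarrow> 'a \<Rightarrow> complex" where
  "block_compression W a n = (\<lambda>i j. \<Sum>k<n. \<Sum>l<n. cnj (a k) * a l * W (i, k) (j, l))"

lemma block_compression_lincomb:
  "block_compression W a n =
    (\<lambda>i j. \<Sum>p\<in>{..<n} \<times> {..<n}. cnj (a (fst p)) * a (snd p) * block W (fst p) (snd p) i j)"
  by (simp add: block_compression_def block_def sum.cartesian_product split_def)

lemma nuclear_rep_block_compression:
  assumes nr: "nuclear_rep (A \<times> {..<n}) x y"
  shows "nuclear_rep A (\<lambda>m. contract_vec a n (x m)) (\<lambda>m. contract_vec a n (y m))"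
    and "block_compression (rep_op x y) a n = rep_op (\<lambda>m. contract_vec a n (x m)) (\<lambda>m. contract_vec a n (y m))"
proof -
  define K where "K = (\<Sum>k<n. cmod (a k))"
  have bound: "l2norm A (contract_vec a n (x m)) * l2norm A (contract_vec a n (y m))
      \<le> K^2 * (l2norm (A \<times> {..<n}) (x m) * l2norm (A \<times> {..<n}) (y m))" for m
  proof -
    have "l2norm A (contract_vec a n (x m)) * l2norm A (contract_vec a n (y m))
        \<le> (K * l2norm (A \<times> {..<n}) (x m)) * (K * l2norm (A \<times> {..<n}) (y m))"
      unfolding K_def
      by (intro mult_mono l2_contract_vec(2) nuclear_repD[OF nr] l2norm_nonneg mult_nonneg_nonneg sum_nonneg)
         simp
    then show ?thesis by (simp add: power2_eq_square ac_simps)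
  qed
  have "summable (\<lambda>m. l2norm A (contract_vec a n (x m)) * l2norm A (contract_vec a n (y m)))"
    by (rule summable_comparison_test[OF _ summable_mult[OF nuclear_repD(3)[OF nr], of "K^2"]])
       (use bound in \<open>auto simp: abs_mult l2norm_nonneg\<close>)
  then show "nuclear_rep A (\<lambda>m. contract_vec a n (x m)) (\<lambda>m. contract_vec a n (y m))"
    unfolding nuclear_rep_def using l2_contract_vec(1) nuclear_repD(1,2)[OF nr] by blast
  show "block_compression (rep_op x y) a n = rep_op (\<lambda>m. contract_vec a n (x m)) (\<lambda>m. contract_vec a n (y m))"
  proof (intro ext)
    fix i j
    define t where "t = (\<lambda>k l m. x m (i, k) * cnj (y m (j, l)))"
    have summable_t: "summable (t k l)" for k l
      unfolding t_def by (rule nuclear_rep_entry_summable[OF nr, THEN summable_norm_cancel])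
    have "contract_vec a n (x m) i * cnj (contract_vec a n (y m) j) = (\<Sum>k<n. \<Sum>l<n. cnj (a k) * a l * t k l m)"
      for m by (simp add: contract_vec_def t_def sum_product ac_simps, rule sum.swap)
    then have "rep_op (\<lambda>m. contract_vec a n (x m)) (\<lambda>m. contract_vec a n (y m)) i j
        = (\<Sum>m. \<Sum>k<n. \<Sum>l<n. cnj (a k) * a l * t k l m)"
      by (simp add: rep_op_def)
    also have "\<dots> = (\<Sum>k<n. \<Sum>l<n. \<Sum>m. cnj (a k) * a l * t k l m)"
      by (subst suminf_sum) (auto intro!: summable_sum summable_mult summable_t sum.cong suminf_sum)
    also have "\<dots> = block_compression (rep_op x y) a n i j"
      unfolding block_compression_def
      by (intro sum.cong refl) (subst suminf_mult[OF summable_t], simp add: rep_op_def t_def)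
    finally show "block_compression (rep_op x y) a n i j
        = rep_op (\<lambda>m. contract_vec a n (x m)) (\<lambda>m. contract_vec a n (y m)) i j" ..
  qed
qed

lemma trace_class_block_compression:
  assumes "W \<in> trace_class (A \<times> {..<n})"
  shows "block_compression W a n \<in> trace_class A"
  using assms nuclear_rep_block_compression by (fastforce simp: trace_class_def)

lemma qform_block_compression:
  assumes W: "W \<in> trace_class (A \<times> {..<n})" and u: "u \<in> l2 A"
  shows "qform A (block_compression W a n) u = qform (A \<times> {..<n}) W (tensor_vec u a n)"
proof -
  obtain x y where nr: "nuclear_rep (A \<times> {..<n}) x y" and W_rep: "W = rep_op x y"
    using W by (auto simp: trace_class_def)
  have "qform A (block_compression W a n) u
      = (\<Sum>m. l2_inner A u (contract_vec a n (x m)) * l2_inner A (contract_vec a n (y m)) u)"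
    unfolding W_rep nuclear_rep_block_compression(2)[OF nr]
    by (rule qform_rep_op(2)[OF nuclear_rep_block_compression(1)[OF nr] u])
  also have "\<dots> = qform (A \<times> {..<n}) W (tensor_vec u a n)"
    unfolding W_rep qform_rep_op(2)[OF nr l2_tensor_vec[OF u]]
    by (simp add: l2_inner_tensor_vec[OF u nuclear_repD(1)[OF nr]] l2_inner_tensor_vec[OF u nuclear_repD(2)[OF nr]])
  finally show ?thesis .
qed

lemma positive_tc_block_compression:
  assumes "positive_tc (A \<times> {..<n}) W"
  shows "positive_tc A (block_compression W a n)"
  unfolding positive_tc_def
proof (intro conjI ballI)
  have W: "W \<in> trace_class (A \<times> {..<n})" using assms by (simp add: positive_tc_def)
  then show "block_compression W a n \<in> trace_class A" by (rule trace_class_block_compression)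
  fix u assume u: "u \<in> l2 A"
  show "Im (qform A (block_compression W a n) u) = 0" "0 \<le> Re (qform A (block_compression W a n) u)"
    using assms l2_tensor_vec[OF u] by (auto simp: positive_tc_def qform_block_compression[OF W u])
qed

section \<open>The trace defect of a quantum operation\<close>

lemma quantum_operationD:
  assumes "quantum_operation A B \<Phi>"
  shows "\<And>M. M \<in> trace_class A \<Longrightarrow> \<Phi> M \<in> trace_class B"
    and "\<And>M N. M \<in> trace_class A \<Longrightarrow> N \<in> trace_class A \<Longrightarrow>
      \<Phi> (\<lambda>i j. M i j + N i j) = (\<lambda>i j. \<Phi> M i j + \<Phi> N i j)"
    and "\<And>M c. M \<in> trace_class A \<Longrightarrow> \<Phi> (\<lambda>i j. c * M i j) = (\<lambda>i j. c * \<Phi> M i j)"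
    and "\<And>n W. positive_tc (A \<times> {..<n}) W \<Longrightarrow> positive_tc (B \<times> {..<n}) (ampl n \<Phi> W)"
    and "\<And>M. positive_tc A M \<Longrightarrow> Re (trace B (\<Phi> M)) \<le> Re (trace A M)"
  using assms unfolding quantum_operation_def by blast+

lemma quantum_operation_lincomb:
  assumes qo: "quantum_operation A B \<Phi>"
  shows "finite I \<Longrightarrow> (\<And>p. p \<in> I \<Longrightarrow> M p \<in> trace_class A) \<Longrightarrow>
    \<Phi> (\<lambda>i j. \<Sum>p\<in>I. c p * M p i j) = (\<lambda>i j. \<Sum>p\<in>I. c p * \<Phi> (M p) i j)"
proof (induction I rule: finite_induct)
  case empty
  show ?case using quantum_operationD(3)[OF qo trace_class_zero, of 0] by simp
next
  case (insert p I)
  have tc_p: "(\<lambda>i j. c p * M p i j) \<in> trace_class A"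
    using insert.prems by (intro trace_class_scaleC) simp
  have tc_I: "(\<lambda>i j. \<Sum>p\<in>I. c p * M p i j) \<in> trace_class A"
  proof (rule trace_class_sum[OF insert.hyps(1)])
    fix q assume "q \<in> I"
    then show "(\<lambda>i j. c q * M q i j) \<in> trace_class A" by (intro trace_class_scaleC insert.prems) simp
  qed
  have "\<Phi> (\<lambda>i j. \<Sum>p\<in>insert p I. c p * M p i j) = \<Phi> (\<lambda>i j. c p * M p i j + (\<Sum>p\<in>I. c p * M p i j))"
    using insert.hyps by simp
  also have "\<dots> = (\<lambda>i j. \<Phi> (\<lambda>i j. c p * M p i j) i j + \<Phi> (\<lambda>i j. \<Sum>p\<in>I. c p * M p i j) i j)"
    by (rule quantum_operationD(2)[OF qo tc_p tc_I])
  finally show ?case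
    using insert quantum_operationD(3)[OF qo, of "M p" "c p"] by simp
qed

definition trace_defect ::
    "'a set \<Rightarrow> 'b set \<Rightarrow> (('a \<Rightarrow> 'a \<Rightarrow> complex) \<Rightarrow> ('b \<Rightarrow> 'b \<Rightarrow> complex)) \<Rightarrow> ('a \<Rightarrow> 'a \<Rightarrow> complex) \<Rightarrow> complex" where
  "trace_defect A B \<Phi> M = trace A M - trace B (\<Phi> M)"

lemma trace_defect_lincomb:
  assumes qo: "quantum_operation A B \<Phi>" and I: "finite I" "\<And>p. p \<in> I \<Longrightarrow> M p \<in> trace_class A"
  shows "trace_defect A B \<Phi> (\<lambda>i j. \<Sum>p\<in>I. c p * M p i j) = (\<Sum>p\<in>I. c p * trace_defect A B \<Phi> (M p))"
  using trace_lincomb[OF I] trace_lincomb[OF I(1) quantum_operationD(1)[OF qo I(2)]]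
  by (simp add: trace_defect_def quantum_operation_lincomb[OF qo I] sum_subtractf right_diff_distrib)

lemma trace_defect_nonneg:
  assumes qo: "quantum_operation A B \<Phi>" and "positive_tc A M" "positive_tc B (\<Phi> M)"
  shows "Im (trace_defect A B \<Phi> M) = 0" "Re (trace_defect A B \<Phi> M) \<ge> 0"
  using Im_trace_positive_tc[OF assms(2)] Im_trace_positive_tc[OF assms(3)] quantum_operationD(5)[OF qo assms(2)]
  by (simp_all add: trace_defect_def)

lemma quantum_operation_block_compression:
  assumes qo: "quantum_operation A B \<Phi>" and W: "W \<in> trace_class (A \<times> {..<n})"
  shows "\<Phi> (block_compression W a n) = block_compression (ampl n \<Phi> W) a n"
proof -
  have "\<Phi> (block_compression W a n)
      = (\<lambda>i j. \<Sum>p\<in>{..<n} \<times> {..<n}. cnj (a (fst p)) * a (snd p) * \<Phi> (block W (fst p) (snd p)) i j)"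
    unfolding block_compression_lincomb
    by (rule quantum_operation_lincomb[OF qo]) (auto intro: trace_class_block[OF W])
  also have "\<dots> = block_compression (ampl n \<Phi> W) a n"
    unfolding block_compression_lincomb by (intro ext sum.cong refl) (auto simp: block_ampl mem_Times_iff)
  finally show ?thesis .
qed

lemma positive_tc_trace_defect_matrix:
  assumes qo: "quantum_operation A B \<Phi>" and Wp: "positive_tc (A \<times> {..<n}) W"
  shows "positive_tc {..<n} (\<lambda>k l. if k < n \<and> l < n then trace_defect A B \<Phi> (block W k l) else 0)"
    (is "positive_tc _ ?D")
proof (rule positive_tc_finite)
  fix v
  have W: "W \<in> trace_class (A \<times> {..<n})" using Wp by (simp add: positive_tc_def)
  have "(\<Sum>k<n. cnj (v k) * (\<Sum>l<n. ?D k l * v l))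
      = (\<Sum>k<n. \<Sum>l<n. cnj (v k) * v l * trace_defect A B \<Phi> (block W k l))"
  proof (intro sum.cong refl)
    fix k assume "k \<in> {..<n}"
    then have row: "(\<Sum>l<n. ?D k l * v l) = (\<Sum>l<n. trace_defect A B \<Phi> (block W k l) * v l)"
      by (intro sum.cong) auto
    show "cnj (v k) * (\<Sum>l<n. ?D k l * v l) = (\<Sum>l<n. cnj (v k) * v l * trace_defect A B \<Phi> (block W k l))"
      unfolding row sum_distrib_left by (simp add: mult_ac)
  qed
  also have "\<dots> = (\<Sum>p\<in>{..<n} \<times> {..<n}. cnj (v (fst p)) * v (snd p) * trace_defect A B \<Phi> (block W (fst p) (snd p)))"
    by (simp add: sum.cartesian_product split_def)
  also have "\<dots> = trace_defect A B \<Phi> (block_compression W v n)"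
    unfolding block_compression_lincomb
    by (rule trace_defect_lincomb[OF qo, symmetric]) (auto intro: trace_class_block[OF W])
  finally have defect: "(\<Sum>k<n. cnj (v k) * (\<Sum>l<n. ?D k l * v l)) = trace_defect A B \<Phi> (block_compression W v n)" .
  have "positive_tc B (\<Phi> (block_compression W v n))"
    unfolding quantum_operation_block_compression[OF qo W]
    by (rule positive_tc_block_compression[OF quantum_operationD(4)[OF qo Wp]])
  then have nonneg: "Im (trace_defect A B \<Phi> (block_compression W v n)) = 0"
      "Re (trace_defect A B \<Phi> (block_compression W v n)) \<ge> 0"
    using trace_defect_nonneg[OF qo positive_tc_block_compression[OF Wp]] by blast+
  show "Im (\<Sum>k<n. cnj (v k) * (\<Sum>l<n. ?D k l * v l)) = 0" "Re (\<Sum>k<n. cnj (v k) * (\<Sum>l<n. ?D k l * v l)) \<ge> 0"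
    unfolding defect by (fact nonneg(1), fact nonneg(2))
qed auto

section \<open>Completion to a channel\<close>

definition channel_completion ::
    "'a set \<Rightarrow> 'b set \<Rightarrow> (('a \<Rightarrow> 'a \<Rightarrow> complex) \<Rightarrow> ('b \<Rightarrow> 'b \<Rightarrow> complex))
      \<Rightarrow> ('a \<Rightarrow> 'a \<Rightarrow> complex) \<Rightarrow> ('b + nat \<Rightarrow> 'b + nat \<Rightarrow> complex)" where
  "channel_completion A B \<Phi> M =
    (\<lambda>p q. push_op Inl (\<Phi> M) p q + matrix_unit (Inr 0) (Inr 0) (trace_defect A B \<Phi> M) p q)"

lemma vimage_Inl_Un_Inr: "Inl -` (Inl ` B \<union> Inr ` C) = B"
  by auto

lemma channel_completion_Inl_Inl: "channel_completion A B \<Phi> M (Inl i) (Inl j) = \<Phi> M i j"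
  by (simp add: channel_completion_def push_op_apply matrix_unit_def)

lemma channel_completion_Inr_Inr:
  "channel_completion A B \<Phi> M (Inr a) (Inr b) = (if a = 0 \<and> b = 0 then trace_defect A B \<Phi> M else 0)"
  by (auto simp: channel_completion_def push_op_def matrix_unit_def)

lemma channel_completion_Inl_Inr:
  "channel_completion A B \<Phi> M (Inl i) (Inr b) = 0" "channel_completion A B \<Phi> M (Inr a) (Inl j) = 0"
  by (auto simp: channel_completion_def push_op_def matrix_unit_def)

lemma trace_class_channel_completion:
  assumes qo: "quantum_operation A B \<Phi>" and M: "M \<in> trace_class A"
  shows "push_op Inl (\<Phi> M) \<in> trace_class (Inl ` B \<union> Inr ` {0::nat})"
    and "channel_completion A B \<Phi> M \<in> trace_class (Inl ` B \<union> Inr ` {0})"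
proof -
  show push: "push_op Inl (\<Phi> M) \<in> trace_class (Inl ` B \<union> Inr ` {0})"
    by (rule trace_class_push_op(1)[OF quantum_operationD(1)[OF qo M] inj_Inl vimage_Inl_Un_Inr])
  show "channel_completion A B \<Phi> M \<in> trace_class (Inl ` B \<union> Inr ` {0})"
    unfolding channel_completion_def by (rule trace_class_add[OF push trace_class_matrix_unit(1)]) auto
qed

lemma trace_channel_completion:
  assumes qo: "quantum_operation A B \<Phi>" and M: "M \<in> trace_class A"
  shows "trace (Inl ` B \<union> Inr ` {0}) (channel_completion A B \<Phi> M) = trace A M"
proof -
  have unit: "matrix_unit (Inr 0) (Inr 0) (trace_defect A B \<Phi> M) \<in> trace_class (Inl ` B \<union> Inr ` {0::nat})"
    by (rule trace_class_matrix_unit(1)) auto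
  have "trace (Inl ` B \<union> Inr ` {0}) (channel_completion A B \<Phi> M)
      = trace (Inl ` B \<union> Inr ` {0::nat}) (push_op Inl (\<Phi> M))
        + trace (Inl ` B \<union> Inr ` {0::nat}) (matrix_unit (Inr 0) (Inr 0) (trace_defect A B \<Phi> M))"
    unfolding channel_completion_def
    by (rule trace_add[OF trace_class_channel_completion(1)[OF qo M] unit])
  also have "\<dots> = trace B (\<Phi> M) + trace_defect A B \<Phi> M"
    using trace_push_op[OF quantum_operationD(1)[OF qo M] inj_Inl vimage_Inl_Un_Inr[of B "{0::nat}"]]
      trace_matrix_unit[of "Inr 0" "Inl ` B \<union> Inr ` {0::nat}"] by simp
  finally show ?thesis by (simp add: trace_defect_def)
qed

lemma channel_completion_add:
  assumes qo: "quantum_operation A B \<Phi>" and M: "M \<in> trace_class A" and N: "N \<in> trace_class A"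
  shows "channel_completion A B \<Phi> (\<lambda>i j. M i j + N i j)
    = (\<lambda>p q. channel_completion A B \<Phi> M p q + channel_completion A B \<Phi> N p q)"
proof -
  have additive: "\<Phi> (\<lambda>i j. M i j + N i j) = (\<lambda>i j. \<Phi> M i j + \<Phi> N i j)"
    by (rule quantum_operationD(2)[OF qo M N])
  have "trace_defect A B \<Phi> (\<lambda>i j. M i j + N i j) = trace_defect A B \<Phi> M + trace_defect A B \<Phi> N"
    using trace_add[OF M N] trace_add[OF quantum_operationD(1)[OF qo M] quantum_operationD(1)[OF qo N]]
    by (simp add: trace_defect_def additive)
  then show ?thesis
    by (intro ext) (auto simp: channel_completion_def push_op_def matrix_unit_def additive)
qed

lemma channel_completion_scaleC:
  assumes qo: "quantum_operation A B \<Phi>" and M: "M \<in> trace_class A"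
  shows "channel_completion A B \<Phi> (\<lambda>i j. c * M i j) = (\<lambda>p q. c * channel_completion A B \<Phi> M p q)"
proof -
  have homogeneous: "\<Phi> (\<lambda>i j. c * M i j) = (\<lambda>i j. c * \<Phi> M i j)"
    by (rule quantum_operationD(3)[OF qo M])
  have "trace_defect A B \<Phi> (\<lambda>i j. c * M i j) = c * trace_defect A B \<Phi> M"
    by (simp add: trace_defect_def homogeneous trace_scaleC right_diff_distrib)
  then show ?thesis
    by (intro ext) (auto simp: channel_completion_def push_op_def matrix_unit_def homogeneous distrib_left)
qed

lemma ampl_channel_completion:
  fixes W :: "'a \<times> nat \<Rightarrow> 'a \<times> nat \<Rightarrow> complex"
  defines "g \<equiv> \<lambda>(b, k). (Inl b :: 'b + nat, k)" and "h \<equiv> \<lambda>k. (Inr 0 :: 'b + nat, k)"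
  shows "ampl n (channel_completion A B \<Phi>) W = (\<lambda>s s'. push_op g (ampl n \<Phi> W) s s'
      + push_op h (\<lambda>k l. if k < n \<and> l < n then trace_defect A B \<Phi> (block W k l) else 0) s s')"
proof (intro ext)
  fix s s' :: "('b + nat) \<times> nat"
  have "inj g" "inj h" by (auto simp: g_def h_def inj_def)
  then have g_Inl: "push_op g N (Inl b, k) (Inl b', l) = N (b, k) (b', l)"
    and h_Inr: "push_op h N' (Inr 0, k) (Inr 0, l) = N' k l" for N N' b k b' l
    using push_op_apply[of g N "(b, k)" "(b', l)"] push_op_apply[of h N' k l] by (simp_all add: g_def h_def)
  have g_Inr: "push_op g N (Inr a, k) t = 0" "push_op g N t (Inr a, k) = 0" for N a k t
    by (auto simp: push_op_def g_def)
  have h_Inl: "push_op h N (Inl b, k) t = 0" "push_op h N t (Inl b, k) = 0" for N b k t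
    by (auto simp: push_op_def h_def)
  have h_Inr_nonzero: "push_op h N (Inr a, k) (Inr a', l) = 0" if "a \<noteq> 0 \<or> a' \<noteq> 0" for N a a' k l
    using that by (auto simp: push_op_def h_def)
  obtain p k q l where "s = (p, k)" "s' = (q, l)" by (cases s, cases s')
  then show "ampl n (channel_completion A B \<Phi>) W s s' = push_op g (ampl n \<Phi> W) s s'
      + push_op h (\<lambda>k l. if k < n \<and> l < n then trace_defect A B \<Phi> (block W k l) else 0) s s'"
    by (cases p; cases q)
       (auto simp: ampl_block g_Inl h_Inr g_Inr h_Inl h_Inr_nonzero channel_completion_Inl_Inl
         channel_completion_Inr_Inr channel_completion_Inl_Inr)
qed

lemma positive_tc_ampl_channel_completion:
  assumes qo: "quantum_operation A B \<Phi>" and Wp: "positive_tc (A \<times> {..<n}) W"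
  shows "positive_tc ((Inl ` B \<union> Inr ` {0}) \<times> {..<n}) (ampl n (channel_completion A B \<Phi>) W)"
  unfolding ampl_channel_completion
proof (rule positive_tc_add)
  show "positive_tc ((Inl ` B \<union> Inr ` {0}) \<times> {..<n}) (push_op (\<lambda>(b, k). (Inl b :: 'b + nat, k)) (ampl n \<Phi> W))"
    by (rule positive_tc_push_op[OF quantum_operationD(4)[OF qo Wp]]) (auto simp: inj_def)
  show "positive_tc ((Inl ` B \<union> Inr ` {0}) \<times> {..<n}) (push_op (\<lambda>k. (Inr 0 :: 'b + nat, k))
      (\<lambda>k l. if k < n \<and> l < n then trace_defect A B \<Phi> (block W k l) else 0))"
    by (rule positive_tc_push_op[OF positive_tc_trace_defect_matrix[OF qo Wp]]) (auto simp: inj_def)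
qed

lemma quantum_channel_channel_completion:
  assumes qo: "quantum_operation A B \<Phi>"
  shows "quantum_channel A (Inl ` B \<union> Inr ` {0}) (channel_completion A B \<Phi>)"
  unfolding quantum_channel_def quantum_operation_def
proof (intro conjI ballI allI impI)
  fix M assume M: "M \<in> trace_class A"
  show "channel_completion A B \<Phi> M \<in> trace_class (Inl ` B \<union> Inr ` {0})"
    by (rule trace_class_channel_completion(2)[OF qo M])
  show "trace (Inl ` B \<union> Inr ` {0}) (channel_completion A B \<Phi> M) = trace A M"
    by (rule trace_channel_completion[OF qo M])
  fix c :: complex
  show "channel_completion A B \<Phi> (\<lambda>i j. c * M i j) = (\<lambda>i j. c * channel_completion A B \<Phi> M i j)"
    by (rule channel_completion_scaleC[OF qo M])
next
  fix M N assume "M \<in> trace_class A" "N \<in> trace_class A"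
  then show "channel_completion A B \<Phi> (\<lambda>i j. M i j + N i j)
      = (\<lambda>i j. channel_completion A B \<Phi> M i j + channel_completion A B \<Phi> N i j)"
    by (rule channel_completion_add[OF qo])
next
  fix n :: nat and W assume "positive_tc (A \<times> {..<n}) W"
  then show "positive_tc ((Inl ` B \<union> Inr ` {0}) \<times> {..<n}) (ampl n (channel_completion A B \<Phi>) W)"
    by (rule positive_tc_ampl_channel_completion[OF qo])
next
  fix M assume "positive_tc A M"
  then show "Re (trace (Inl ` B \<union> Inr ` {0}) (channel_completion A B \<Phi> M)) \<le> Re (trace A M)"
    using trace_channel_completion[OF qo] by (simp add: positive_tc_def)
qed

lemma trace_norm_channel_completion_diff:
  assumes qo: "quantum_operation A B \<Phi>" and qo': "quantum_operation A B \<Phi>'" and \<rho>: "\<rho> \<in> trace_class A"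
  shows "trace_norm (Inl ` B \<union> Inr ` {0})
      (\<lambda>p q. channel_completion A B \<Phi> \<rho> p q - channel_completion A B \<Phi>' \<rho> p q)
    \<le> 2 * trace_norm B (\<lambda>i j. \<Phi> \<rho> i j - \<Phi>' \<rho> i j)"
proof -
  define D where "D = (\<lambda>i j. \<Phi> \<rho> i j - \<Phi>' \<rho> i j)"
  have D: "D \<in> trace_class B"
    unfolding D_def by (rule trace_class_diff[OF quantum_operationD(1)[OF qo \<rho>] quantum_operationD(1)[OF qo' \<rho>]])
  have "trace_defect A B \<Phi> \<rho> - trace_defect A B \<Phi>' \<rho> = - trace B D"
    unfolding trace_defect_def D_def trace_diff[OF quantum_operationD(1)[OF qo \<rho>] quantum_operationD(1)[OF qo' \<rho>]]
    by simp
  then have diff: "(\<lambda>p q. channel_completion A B \<Phi> \<rho> p q - channel_completion A B \<Phi>' \<rho> p q)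
      = (\<lambda>p q. push_op Inl D p q + matrix_unit (Inr 0) (Inr 0) (- trace B D) p q)"
    by (intro ext) (auto simp: channel_completion_def push_op_def matrix_unit_def D_def)
  have push: "push_op Inl D \<in> trace_class (Inl ` B \<union> Inr ` {0::nat})"
    by (rule trace_class_push_op(1)[OF D inj_Inl vimage_Inl_Un_Inr])
  have unit: "matrix_unit (Inr 0) (Inr 0) (- trace B D) \<in> trace_class (Inl ` B \<union> Inr ` {0::nat})"
    by (rule trace_class_matrix_unit(1)) auto
  have "trace_norm (Inl ` B \<union> Inr ` {0::nat}) (\<lambda>p q. push_op Inl D p q + matrix_unit (Inr 0) (Inr 0) (- trace B D) p q)
      \<le> trace_norm (Inl ` B \<union> Inr ` {0::nat}) (push_op Inl D)
        + trace_norm (Inl ` B \<union> Inr ` {0::nat}) (matrix_unit (Inr 0) (Inr 0) (- trace B D))"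
    by (rule trace_norm_triangle[OF push unit])
  also have "\<dots> \<le> trace_norm B D + cmod (- trace B D)"
    by (intro add_mono trace_class_push_op(2)[OF D inj_Inl vimage_Inl_Un_Inr] trace_class_matrix_unit(2)) auto
  also have "cmod (- trace B D) \<le> trace_norm B D"
    using norm_trace_le_trace_norm[OF D] by simp
  finally show ?thesis unfolding diff D_def by simp
qed

lemma trace_class_Inl_block:
  assumes "D \<in> trace_class (Inl ` B \<union> Inr ` C)"
  shows "(\<lambda>i j. D (Inl i) (Inl j)) \<in> trace_class B"
    and "trace_norm B (\<lambda>i j. D (Inl i) (Inl j)) \<le> trace_norm (Inl ` B \<union> Inr ` C) D"
  using trace_class_pullback[OF assms inj_Inl vimage_Inl_Un_Inr inj_Inl vimage_Inl_Un_Inr] by auto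

section \<open>Strong convergence\<close>

lemma density_ops_trace_class: "\<rho> \<in> density_ops A \<Longrightarrow> \<rho> \<in> trace_class A"
  by (simp add: density_ops_def positive_tc_def)

lemma strongly_converges_channel_completion:
  assumes qo: "\<And>n. quantum_operation A B (\<Phi> n)"
    and conv: "strongly_converges A B (\<lambda>n. \<Phi> (Suc n)) (\<Phi> 0)"
  shows "strongly_converges A (Inl ` B \<union> Inr ` {0})
    (\<lambda>n. channel_completion A B (\<Phi> (Suc n))) (channel_completion A B (\<Phi> 0))"
  unfolding strongly_converges_def
proof
  fix \<rho> assume \<rho>: "\<rho> \<in> density_ops A"
  then have tc: "\<rho> \<in> trace_class A" by (rule density_ops_trace_class)
  have "(\<lambda>n. trace_norm B (\<lambda>i j. \<Phi> (Suc n) \<rho> i j - \<Phi> 0 \<rho> i j)) \<longlonglongrightarrow> 0"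
    using conv \<rho> by (simp add: strongly_converges_def)
  from tendsto_mult_right_zero[OF this, of 2]
  have bound_to_zero: "(\<lambda>n. 2 * trace_norm B (\<lambda>i j. \<Phi> (Suc n) \<rho> i j - \<Phi> 0 \<rho> i j)) \<longlonglongrightarrow> 0" .
  have "norm (trace_norm (Inl ` B \<union> Inr ` {0})
        (\<lambda>p q. channel_completion A B (\<Phi> (Suc n)) \<rho> p q - channel_completion A B (\<Phi> 0) \<rho> p q))
      \<le> 2 * trace_norm B (\<lambda>i j. \<Phi> (Suc n) \<rho> i j - \<Phi> 0 \<rho> i j)" for n
    using trace_norm_nonneg[OF trace_class_diff[OF trace_class_channel_completion(2)[OF qo tc]
        trace_class_channel_completion(2)[OF qo tc]]]
      trace_norm_channel_completion_diff[OF qo qo tc]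
    by simp
  then show "(\<lambda>n. trace_norm (Inl ` B \<union> Inr ` {0})
      (\<lambda>i j. channel_completion A B (\<Phi> (Suc n)) \<rho> i j - channel_completion A B (\<Phi> 0) \<rho> i j)) \<longlonglongrightarrow> 0"
    by (intro Lim_null_comparison[OF always_eventually bound_to_zero]) blast
qed

lemma strongly_converges_Inl_block:
  assumes qo: "\<And>n. quantum_operation A (Inl ` B \<union> Inr ` C) (\<Psi> n)"
    and conv: "strongly_converges A (Inl ` B \<union> Inr ` C) (\<lambda>n. \<Psi> (Suc n)) (\<Psi> 0)"
    and block: "\<And>n \<rho>. \<rho> \<in> trace_class A \<Longrightarrow> \<Phi> n \<rho> = (\<lambda>i j. \<Psi> n \<rho> (Inl i) (Inl j))"
  shows "strongly_converges A B (\<lambda>n. \<Phi> (Suc n)) (\<Phi> 0)"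
  unfolding strongly_converges_def
proof
  fix \<rho> assume \<rho>: "\<rho> \<in> density_ops A"
  then have tc: "\<rho> \<in> trace_class A" by (rule density_ops_trace_class)
  define D where "D = (\<lambda>n i j. \<Psi> (Suc n) \<rho> i j - \<Psi> 0 \<rho> i j)"
  have D: "D n \<in> trace_class (Inl ` B \<union> Inr ` C)" for n
    unfolding D_def by (rule trace_class_diff[OF quantum_operationD(1)[OF qo tc] quantum_operationD(1)[OF qo tc]])
  have lim: "(\<lambda>n. trace_norm (Inl ` B \<union> Inr ` C) (D n)) \<longlonglongrightarrow> 0"
    using conv \<rho> by (simp add: strongly_converges_def D_def)
  have "norm (trace_norm B (\<lambda>i j. \<Phi> (Suc n) \<rho> i j - \<Phi> 0 \<rho> i j)) \<le> trace_norm (Inl ` B \<union> Inr ` C) (D n)" for n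
    using trace_norm_nonneg[OF trace_class_Inl_block(1)[OF D]] trace_class_Inl_block(2)[OF D]
    by (simp add: block[OF tc] D_def)
  then show "(\<lambda>n. trace_norm B (\<lambda>i j. \<Phi> (Suc n) \<rho> i j - \<Phi> 0 \<rho> i j)) \<longlonglongrightarrow> 0"
    by (intro Lim_null_comparison[OF always_eventually lim]) blast
qed

theorem lemma2:
  fixes A :: "'a set" and B :: "'b set"
    and \<Phi> :: "nat \<Rightarrow> ('a \<Rightarrow> 'a \<Rightarrow> complex) \<Rightarrow> ('b \<Rightarrow> 'b \<Rightarrow> complex)"
  assumes "countable A" and "countable B"
    and "\<forall>n. quantum_operation A B (\<Phi> n)"
  shows "strongly_converges A B (\<lambda>n. \<Phi> (Suc n)) (\<Phi> 0) \<longleftrightarrow>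
    (\<exists>C :: nat set. \<exists>\<Psi> :: nat \<Rightarrow> ('a \<Rightarrow> 'a \<Rightarrow> complex) \<Rightarrow> ('b + nat \<Rightarrow> 'b + nat \<Rightarrow> complex).
       (\<forall>n. quantum_channel A (Inl ` B \<union> Inr ` C) (\<Psi> n))
     \<and> strongly_converges A (Inl ` B \<union> Inr ` C) (\<lambda>n. \<Psi> (Suc n)) (\<Psi> 0)
     \<and> (\<forall>n. \<forall>\<rho> \<in> trace_class A. \<Phi> n \<rho> = (\<lambda>i j. \<Psi> n \<rho> (Inl i) (Inl j))))"
proof
  have qo: "\<And>n. quantum_operation A B (\<Phi> n)" using assms(3) by blast
  assume "strongly_converges A B (\<lambda>n. \<Phi> (Suc n)) (\<Phi> 0)"
  with qo have "strongly_converges A (Inl ` B \<union> Inr ` {0})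
      (\<lambda>n. channel_completion A B (\<Phi> (Suc n))) (channel_completion A B (\<Phi> 0))"
    by (rule strongly_converges_channel_completion)
  moreover have "quantum_channel A (Inl ` B \<union> Inr ` {0}) (channel_completion A B (\<Phi> n))" for n
    by (rule quantum_channel_channel_completion[OF qo])
  ultimately have "(\<forall>n. quantum_channel A (Inl ` B \<union> Inr ` {0}) (channel_completion A B (\<Phi> n)))
     \<and> strongly_converges A (Inl ` B \<union> Inr ` {0})
         (\<lambda>n. channel_completion A B (\<Phi> (Suc n))) (channel_completion A B (\<Phi> 0))
     \<and> (\<forall>n. \<forall>\<rho> \<in> trace_class A. \<Phi> n \<rho> = (\<lambda>i j. channel_completion A B (\<Phi> n) \<rho> (Inl i) (Inl j)))"
    by (simp add: channel_completion_Inl_Inl)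
  then show "\<exists>(C :: nat set) (\<Psi> :: nat \<Rightarrow> ('a \<Rightarrow> 'a \<Rightarrow> complex) \<Rightarrow> ('b + nat \<Rightarrow> 'b + nat \<Rightarrow> complex)).
       (\<forall>n. quantum_channel A (Inl ` B \<union> Inr ` C) (\<Psi> n))
     \<and> strongly_converges A (Inl ` B \<union> Inr ` C) (\<lambda>n. \<Psi> (Suc n)) (\<Psi> 0)
     \<and> (\<forall>n. \<forall>\<rho> \<in> trace_class A. \<Phi> n \<rho> = (\<lambda>i j. \<Psi> n \<rho> (Inl i) (Inl j)))"
    by (intro exI[of _ "{0}"] exI[of _ "\<lambda>n. channel_completion A B (\<Phi> n)"])
next
  assume "\<exists>(C :: nat set) (\<Psi> :: nat \<Rightarrow> ('a \<Rightarrow> 'a \<Rightarrow> complex) \<Rightarrow> ('b + nat \<Rightarrow> 'b + nat \<Rightarrow> complex)).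
       (\<forall>n. quantum_channel A (Inl ` B \<union> Inr ` C) (\<Psi> n))
     \<and> strongly_converges A (Inl ` B \<union> Inr ` C) (\<lambda>n. \<Psi> (Suc n)) (\<Psi> 0)
     \<and> (\<forall>n. \<forall>\<rho> \<in> trace_class A. \<Phi> n \<rho> = (\<lambda>i j. \<Psi> n \<rho> (Inl i) (Inl j)))"
  then obtain C :: "nat set" and \<Psi> where "\<And>n. quantum_channel A (Inl ` B \<union> Inr ` C) (\<Psi> n)"
      and "strongly_converges A (Inl ` B \<union> Inr ` C) (\<lambda>n. \<Psi> (Suc n)) (\<Psi> 0)"
      and "\<And>n \<rho>. \<rho> \<in> trace_class A \<Longrightarrow> \<Phi> n \<rho> = (\<lambda>i j. \<Psi> n \<rho> (Inl i) (Inl j))"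
    by blast
  then show "strongly_converges A B (\<lambda>n. \<Phi> (Suc n)) (\<Phi> 0)"
    by (intro strongly_converges_Inl_block[where \<Psi> = \<Psi> and C = C]) (auto simp: quantum_channel_def)
qed

end
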